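(* Let $\succ$ be a binary relation on $\mathcal{F}$. Then $\succ$ satisfies Axioms A1, A2, A3, A5, A6, A7 below if and only if there exist a non-constant affine function $u:X\to\mathbb{R}$, unique up to positive affine transformation, and a unique pair of monotonic constant-linear functionals $I_p,I_o:B_0(\Sigma)\to\mathbb{R}$ with $I_p(u(h))\le I_o(u(h))$ for all $h\in\mathcal{F}$, such that for all $f,g\in\mathcal{F}$, $$f\succ g\iff\begin{cases}I_p(u(f))>I_p(u(g)),\\ I_o(u(f))>I_o(u(g)).\end{cases}$$ Axioms: (A1) $\succ$ is asymmetric and transitive, and its restriction to $X$ is non-trivial and negatively transitive. (A2) For all $f,g,h\in\mathcal{F}$, $\{\alpha\in[0,1]:\alpha f+(1-\alpha)g\succ h\}$ and $\{\alpha\in[0,1]:h\succ\alpha f+(1-\alpha)g\}$ are open in $[0,1]$. (A3) For all $f,g\in\mathcal{F}$, $x\in X$, $\alpha\in(0,1)$: $f\succ g$ iff $\alpha f+(1-\alpha)x\succ\alpha g+(1-\alpha)x$. (A5) If $f(s)\succ g(s)$ for all $s\in S$ then $f\succ g$. (A6) If for all $x\in X$, $f\Join x$ implies $g\Join x$, then $f\Join g$. (A7) If $f\Join x$, $x\succ g$, $g\Join y$, $f\succ y$ (with $x,y\in X$), then $f\succ g$.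
   Context: $S$ is a set of states with algebra $\Sigma$; $X$ is a non-singleton convex subset of a real vector space; $\mathcal{F}$ is the set of simple acts $f:S\to X$ ($\Sigma$-measurable, finitely many values) with pointwise mixtures; elements of $X$ are identified with constant acts. $f\Join g$ means $f\not\succ g$ and $g\not\succ f$. $B_0(\Sigma)$ is the set of real-valued $\Sigma$-measurable simple functions on $S$; $u(f)$ denotes $s\mapsto u(f(s))\in B_0(\Sigma)$. A functional $I:B_0(\Sigma)\to\mathbb{R}$ is constant-linear if $I(a\varphi+b)=aI(\varphi)+b$ for all $\varphi\in B_0(\Sigma)$, $a\ge0$, $b\in\mathbb{R}$ ($b$ the constant function), and monotonic if $\varphi\ge\psi$ pointwise implies $I(\varphi)\ge I(\psi)$. *)

theory Defs
  imports "HOL-Analysis.Analysis"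
begin

definition acts :: "'s set set \<Rightarrow> 'x set \<Rightarrow> ('s \<Rightarrow> 'x) set" where
  "acts \<Sigma> X = {f. range f \<subseteq> X \<and> finite (range f) \<and> (\<forall>x. f -` {x} \<in> \<Sigma>)}"

definition B0 :: "'s set set \<Rightarrow> ('s \<Rightarrow> real) set" where
  "B0 \<Sigma> = {\<phi>. finite (range \<phi>) \<and> (\<forall>r. \<phi> -` {r} \<in> \<Sigma>)}"

definition mix :: "real \<Rightarrow> ('s \<Rightarrow> 'x::real_vector) \<Rightarrow> ('s \<Rightarrow> 'x) \<Rightarrow> ('s \<Rightarrow> 'x)" where
  "mix \<alpha> f g = (\<lambda>s. \<alpha> *\<^sub>R f s + (1 - \<alpha>) *\<^sub>R g s)"

definition cst :: "'x \<Rightarrow> ('s \<Rightarrow> 'x)" where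
  "cst x = (\<lambda>_. x)"

definition incomp :: "('a \<Rightarrow> 'a \<Rightarrow> bool) \<Rightarrow> 'a \<Rightarrow> 'a \<Rightarrow> bool" where
  "incomp P f g \<longleftrightarrow> \<not> P f g \<and> \<not> P g f"

definition A1 :: "'s set set \<Rightarrow> 'x::real_vector set \<Rightarrow> (('s \<Rightarrow> 'x) \<Rightarrow> ('s \<Rightarrow> 'x) \<Rightarrow> bool) \<Rightarrow> bool" where
  "A1 \<Sigma> X P \<longleftrightarrow>
     (\<forall>f\<in>acts \<Sigma> X. \<forall>g\<in>acts \<Sigma> X. P f g \<longrightarrow> \<not> P g f) \<and>
     (\<forall>f\<in>acts \<Sigma> X. \<forall>g\<in>acts \<Sigma> X. \<forall>h\<in>acts \<Sigma> X. P f g \<and> P g h \<longrightarrow> P f h) \<and>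
     (\<exists>x\<in>X. \<exists>y\<in>X. P (cst x) (cst y)) \<and>
     (\<forall>x\<in>X. \<forall>y\<in>X. \<forall>z\<in>X. \<not> P (cst x) (cst y) \<and> \<not> P (cst y) (cst z) \<longrightarrow> \<not> P (cst x) (cst z))"

definition A2 :: "'s set set \<Rightarrow> 'x::real_vector set \<Rightarrow> (('s \<Rightarrow> 'x) \<Rightarrow> ('s \<Rightarrow> 'x) \<Rightarrow> bool) \<Rightarrow> bool" where
  "A2 \<Sigma> X P \<longleftrightarrow>
     (\<forall>f\<in>acts \<Sigma> X. \<forall>g\<in>acts \<Sigma> X. \<forall>h\<in>acts \<Sigma> X.
        openin (top_of_set {0..1}) {\<alpha>\<in>{0..1::real}. P (mix \<alpha> f g) h} \<and>
        openin (top_of_set {0..1}) {\<alpha>\<in>{0..1::real}. P h (mix \<alpha> f g)})"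

definition A3 :: "'s set set \<Rightarrow> 'x::real_vector set \<Rightarrow> (('s \<Rightarrow> 'x) \<Rightarrow> ('s \<Rightarrow> 'x) \<Rightarrow> bool) \<Rightarrow> bool" where
  "A3 \<Sigma> X P \<longleftrightarrow>
     (\<forall>f\<in>acts \<Sigma> X. \<forall>g\<in>acts \<Sigma> X. \<forall>x\<in>X. \<forall>\<alpha>\<in>{0<..<1::real}.
        P f g \<longleftrightarrow> P (mix \<alpha> f (cst x)) (mix \<alpha> g (cst x)))"

definition A5 :: "'s set set \<Rightarrow> 'x::real_vector set \<Rightarrow> (('s \<Rightarrow> 'x) \<Rightarrow> ('s \<Rightarrow> 'x) \<Rightarrow> bool) \<Rightarrow> bool" where
  "A5 \<Sigma> X P \<longleftrightarrow>
     (\<forall>f\<in>acts \<Sigma> X. \<forall>g\<in>acts \<Sigma> X. (\<forall>s. P (cst (f s)) (cst (g s))) \<longrightarrow> P f g)"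

definition A6 :: "'s set set \<Rightarrow> 'x::real_vector set \<Rightarrow> (('s \<Rightarrow> 'x) \<Rightarrow> ('s \<Rightarrow> 'x) \<Rightarrow> bool) \<Rightarrow> bool" where
  "A6 \<Sigma> X P \<longleftrightarrow>
     (\<forall>f\<in>acts \<Sigma> X. \<forall>g\<in>acts \<Sigma> X.
        (\<forall>x\<in>X. incomp P f (cst x) \<longrightarrow> incomp P g (cst x)) \<longrightarrow> incomp P f g)"

definition A7 :: "'s set set \<Rightarrow> 'x::real_vector set \<Rightarrow> (('s \<Rightarrow> 'x) \<Rightarrow> ('s \<Rightarrow> 'x) \<Rightarrow> bool) \<Rightarrow> bool" where
  "A7 \<Sigma> X P \<longleftrightarrow>
     (\<forall>f\<in>acts \<Sigma> X. \<forall>g\<in>acts \<Sigma> X. \<forall>x\<in>X. \<forall>y\<in>X.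
        incomp P f (cst x) \<and> P (cst x) g \<and> incomp P g (cst y) \<and> P f (cst y) \<longrightarrow> P f g)"

definition affine_on :: "'x::real_vector set \<Rightarrow> ('x \<Rightarrow> real) \<Rightarrow> bool" where
  "affine_on X u \<longleftrightarrow>
     (\<forall>x\<in>X. \<forall>y\<in>X. \<forall>\<alpha>\<in>{0..1::real}.
        u (\<alpha> *\<^sub>R x + (1 - \<alpha>) *\<^sub>R y) = \<alpha> * u x + (1 - \<alpha>) * u y)"

definition constant_linear :: "'s set set \<Rightarrow> (('s \<Rightarrow> real) \<Rightarrow> real) \<Rightarrow> bool" where
  "constant_linear \<Sigma> I \<longleftrightarrow>
     (\<forall>\<phi>\<in>B0 \<Sigma>. \<forall>a\<ge>0. \<forall>b. I (\<lambda>s. a * \<phi> s + b) = a * I \<phi> + b)"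

definition monotonic :: "'s set set \<Rightarrow> (('s \<Rightarrow> real) \<Rightarrow> real) \<Rightarrow> bool" where
  "monotonic \<Sigma> I \<longleftrightarrow>
     (\<forall>\<phi>\<in>B0 \<Sigma>. \<forall>\<psi>\<in>B0 \<Sigma>. (\<forall>s. \<phi> s \<ge> \<psi> s) \<longrightarrow> I \<phi> \<ge> I \<psi>)"

definition represents :: "'s set set \<Rightarrow> 'x::real_vector set \<Rightarrow> (('s \<Rightarrow> 'x) \<Rightarrow> ('s \<Rightarrow> 'x) \<Rightarrow> bool)
    \<Rightarrow> ('x \<Rightarrow> real) \<Rightarrow> (('s \<Rightarrow> real) \<Rightarrow> real) \<Rightarrow> (('s \<Rightarrow> real) \<Rightarrow> real) \<Rightarrow> bool" where
  "represents \<Sigma> X P u Ip Io \<longleftrightarrow>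
     affine_on X u \<and> (\<exists>x\<in>X. \<exists>y\<in>X. u x \<noteq> u y) \<and>
     monotonic \<Sigma> Ip \<and> constant_linear \<Sigma> Ip \<and>
     monotonic \<Sigma> Io \<and> constant_linear \<Sigma> Io \<and>
     (\<forall>h\<in>acts \<Sigma> X. Ip (u \<circ> h) \<le> Io (u \<circ> h)) \<and>
     (\<forall>f\<in>acts \<Sigma> X. \<forall>g\<in>acts \<Sigma> X.
        P f g \<longleftrightarrow> Ip (u \<circ> f) > Ip (u \<circ> g) \<and> Io (u \<circ> f) > Io (u \<circ> g))"

end

(* Restricted to constant acts, the preference is a continuous weak order on the convex set X
   that satisfies independence, so it has an affine utility u (Herstein-Milnor): the strictly
   preferred differences a - b form a convex cone, and u measures x - x0 against a fixed
   preferred direction x1 - x0.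

   For an act f let Ip f be the supremum of u over the constants strictly worse than f.
   Continuity (A2) and dominance (A5) show that the constants strictly worse than f are exactly
   those of utility below Ip f; independence (A3) makes Ip commute with mixing by constants, and
   hence with positive affine changes of the utility profile u o f. The optimistic value Io is
   Ip of the reversed preference. A6 and A7 say that f is preferred to g exactly when both values
   of f exceed those of g. Since every simple function is a positive affine image of some
   utility profile, Ip and Io extend to monotonic constant-linear functionals on B0.

   Conversely, such a representation satisfies the axioms (A2 because the functionals are
   Lipschitz along mixtures), and it is unique: the preference determines the order on X and the
   thresholds Ip (u o f), Io (u o f). *)

theory Submission
  imports Defs
begin

section \<open>Simple acts and constant-linear functionals\<close>

lemma cst_in_acts:
  assumes "algebra UNIV \<Sigma>" and "x \<in> X"
  shows "cst x \<in> acts \<Sigma> X"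
proof -
  interpret algebra UNIV \<Sigma> by fact
  have "cst x -` {y} = (if y = x then UNIV else {})" for y :: 'b by (auto simp: cst_def)
  then show ?thesis using \<open>x \<in> X\<close> top by (auto simp: acts_def cst_def)
qed

lemma mix_cst_cst: "mix t (cst x) (cst y) = cst (t *\<^sub>R x + (1 - t) *\<^sub>R y)"
  by (simp add: mix_def cst_def)

lemma mix_one: "mix 1 f g = f"
  by (simp add: mix_def)

lemma simple_fun_comp:
  assumes "algebra UNIV \<Sigma>" and fin: "finite (range f)" and meas: "\<forall>x. f -` {x} \<in> \<Sigma>"
  shows "finite (range (G \<circ> f))" and "(G \<circ> f) -` {y} \<in> \<Sigma>"
proof -
  interpret algebra UNIV \<Sigma> by fact
  show "finite (range (G \<circ> f))" using fin by (metis finite_imageI image_comp)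
  have "(G \<circ> f) -` {y} = (\<Union>x\<in>range f \<inter> G -` {y}. f -` {x})" by auto
  also have "\<dots> \<in> \<Sigma>" using fin meas by (intro finite_UN) auto
  finally show "(G \<circ> f) -` {y} \<in> \<Sigma>" .
qed

lemma acts_comp:
  assumes "algebra UNIV \<Sigma>" and "finite (range f)" and "\<forall>x. f -` {x} \<in> \<Sigma>"
    and "\<And>s. G (f s) \<in> X"
  shows "G \<circ> f \<in> acts \<Sigma> X"
  using simple_fun_comp[OF assms(1-3)] assms(4) by (auto simp: acts_def)

lemma B0_comp:
  assumes "algebra UNIV \<Sigma>" and "finite (range f)" and "\<forall>x. f -` {x} \<in> \<Sigma>"
  shows "G \<circ> f \<in> B0 \<Sigma>"
  using simple_fun_comp[OF assms] by (auto simp: B0_def)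

lemma comp_acts_in_B0: "algebra UNIV \<Sigma> \<Longrightarrow> f \<in> acts \<Sigma> X \<Longrightarrow> u \<circ> f \<in> B0 \<Sigma>"
  unfolding acts_def using B0_comp[of \<Sigma> f u] by blast

lemma B0_const: "algebra UNIV \<Sigma> \<Longrightarrow> (\<lambda>_. c) \<in> B0 \<Sigma>"
  using comp_acts_in_B0[OF _ cst_in_acts, of \<Sigma> c UNIV "\<lambda>x. x"] by (simp add: cst_def comp_def)

lemma B0_affine: "algebra UNIV \<Sigma> \<Longrightarrow> \<phi> \<in> B0 \<Sigma> \<Longrightarrow> (\<lambda>s. a * \<phi> s + c) \<in> B0 \<Sigma>"
  using B0_comp[of \<Sigma> \<phi> "\<lambda>r. a * r + c"] unfolding B0_def comp_def by blast

lemma acts_in_X: "f \<in> acts \<Sigma> X \<Longrightarrow> f s \<in> X"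
  by (auto simp: acts_def)

lemma mix_in_acts:
  assumes "algebra UNIV \<Sigma>" and "convex X" and f: "f \<in> acts \<Sigma> X" and g: "g \<in> acts \<Sigma> X"
    and "0 \<le> t" and "t \<le> 1"
  shows "mix t f g \<in> acts \<Sigma> X"
proof -
  interpret algebra UNIV \<Sigma> by fact
  let ?fg = "\<lambda>s. (f s, g s)"
  have "range ?fg \<subseteq> range f \<times> range g" by auto
  moreover have "finite (range f \<times> range g)" using f g by (simp add: acts_def)
  ultimately have "finite (range ?fg)" by (rule finite_subset)
  moreover have "?fg -` {p} \<in> \<Sigma>" for p
  proof -
    have "?fg -` {p} = f -` {fst p} \<inter> g -` {snd p}" by (cases p) auto
    then show ?thesis using f g by (auto simp: acts_def)
  qed
  moreover have "t *\<^sub>R f s + (1 - t) *\<^sub>R g s \<in> X" for s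
    using assms by (intro convexD) (auto simp: acts_def)
  ultimately have "(\<lambda>p. t *\<^sub>R fst p + (1 - t) *\<^sub>R snd p) \<circ> ?fg \<in> acts \<Sigma> X"
    using assms(1) by (intro acts_comp) auto
  then show ?thesis by (simp add: mix_def comp_def)
qed

lemma constant_linearD:
  "constant_linear \<Sigma> I \<Longrightarrow> \<phi> \<in> B0 \<Sigma> \<Longrightarrow> 0 \<le> a \<Longrightarrow> I (\<lambda>s. a * \<phi> s + b) = a * I \<phi> + b"
  by (simp add: constant_linear_def)

lemma monotonicD:
  "monotonic \<Sigma> I \<Longrightarrow> \<phi> \<in> B0 \<Sigma> \<Longrightarrow> \<psi> \<in> B0 \<Sigma> \<Longrightarrow> (\<And>s. \<psi> s \<le> \<phi> s) \<Longrightarrow> I \<psi> \<le> I \<phi>"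
  by (simp add: monotonic_def)

lemma constant_linear_const:
  assumes "algebra UNIV \<Sigma>" and "constant_linear \<Sigma> I"
  shows "I (\<lambda>_. c) = c"
proof -
  have "I (\<lambda>s. 0 * 0 + c) = 0 * I (\<lambda>_. 0) + c"
    using constant_linearD[OF assms(2) B0_const[OF assms(1)]] by blast
  then show ?thesis by simp
qed

lemma monotonic_constant_linear_le_shift:
  assumes "algebra UNIV \<Sigma>" and "constant_linear \<Sigma> I" and "monotonic \<Sigma> I"
    and "\<phi> \<in> B0 \<Sigma>" and "\<psi> \<in> B0 \<Sigma>" and "\<And>s. \<phi> s \<le> \<psi> s + c"
  shows "I \<phi> \<le> I \<psi> + c"
proof -
  have "(\<lambda>s. 1 * \<psi> s + c) \<in> B0 \<Sigma>" using B0_affine[OF assms(1,5)] .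
  then have "I \<phi> \<le> I (\<lambda>s. 1 * \<psi> s + c)"
    using monotonicD[OF assms(3)] assms(4,6) by simp
  also have "\<dots> = 1 * I \<psi> + c" using constant_linearD[OF assms(2,5), of 1 c] by simp
  finally show ?thesis by simp
qed

lemma monotonic_constant_linear_Min_Max:
  assumes "algebra UNIV \<Sigma>" and "constant_linear \<Sigma> I" and "monotonic \<Sigma> I" and "\<phi> \<in> B0 \<Sigma>"
  shows "Min (range \<phi>) \<le> I \<phi>" and "I \<phi> \<le> Max (range \<phi>)"
proof -
  have fin: "finite (range \<phi>)" using assms(4) by (simp add: B0_def)
  have "I (\<lambda>_. Min (range \<phi>)) \<le> I \<phi> + 0"
    using fin by (intro monotonic_constant_linear_le_shift[OF assms(1-3) B0_const[OF assms(1)] assms(4)])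
      simp
  then show "Min (range \<phi>) \<le> I \<phi>" using constant_linear_const[OF assms(1,2)] by simp
  have "I \<phi> \<le> I (\<lambda>_. Max (range \<phi>)) + 0"
    using fin by (intro monotonic_constant_linear_le_shift[OF assms(1-4) B0_const[OF assms(1)]]) simp
  then show "I \<phi> \<le> Max (range \<phi>)" using constant_linear_const[OF assms(1,2)] by simp
qed

lemma affine_onD:
  "affine_on X u \<Longrightarrow> x \<in> X \<Longrightarrow> y \<in> X \<Longrightarrow> 0 \<le> t \<Longrightarrow> t \<le> 1 \<Longrightarrow>
    u (t *\<^sub>R x + (1 - t) *\<^sub>R y) = t * u x + (1 - t) * u y"
  by (simp add: affine_on_def)

lemma affine_on_ivt:
  assumes "convex X" and "affine_on X u" and "a \<in> X" and "b \<in> X" and "u a \<le> r" and "r \<le> u b"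
  shows "\<exists>x\<in>X. u x = r"
proof (cases "u a = u b")
  case True
  then show ?thesis using assms by (intro bexI[of _ a]) auto
next
  case False
  define t where "t = (r - u a) / (u b - u a)"
  have t: "0 \<le> t" "t \<le> 1" using assms False by (auto simp: t_def field_simps)
  then have "t *\<^sub>R b + (1 - t) *\<^sub>R a \<in> X" using assms by (simp add: convexD)
  moreover have "u (t *\<^sub>R b + (1 - t) *\<^sub>R a) = t * u b + (1 - t) * u a"
    using affine_onD[OF assms(2,4,3) t] .
  moreover have "t * u b + (1 - t) * u a = r"
  proof -
    have "t * (u b - u a) = r - u a" using False by (simp add: t_def)
    then show ?thesis by (simp add: algebra_simps)
  qed
  ultimately show ?thesis by metis
qed

lemma affine_on_uminus: "affine_on X u \<Longrightarrow> affine_on X (\<lambda>x. - u x)"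
  unfolding affine_on_def by (simp add: algebra_simps)

lemma affine_on_same_order_cross_eq:
  assumes "convex X" and u: "affine_on X u" and u': "affine_on X u'"
    and ord: "\<forall>x\<in>X. \<forall>y\<in>X. u y < u x \<longleftrightarrow> u' y < u' x"
    and X: "p \<in> X" "q \<in> X" "z \<in> X" and "u p < u q" and "u p \<le> u z" "u z \<le> u q"
  shows "(u' z - u' p) * (u q - u p) = (u z - u p) * (u' q - u' p)"
proof -
  define t where "t = (u z - u p) / (u q - u p)"
  have t: "0 \<le> t" "t \<le> 1" using assms(8-10) by (auto simp: t_def field_simps)
  define w where "w = t *\<^sub>R q + (1 - t) *\<^sub>R p"
  have w: "w \<in> X" using \<open>convex X\<close> X t by (simp add: w_def convexD)
  have "t * (u q - u p) = u z - u p" using \<open>u p < u q\<close> by (simp add: t_def)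
  then have "u w = u z" using affine_onD[OF u X(2,1) t] by (simp add: w_def algebra_simps)
  then have "u' w = u' z" using ord w X(3) by (metis less_irrefl linorder_neqE_linordered_idom)
  then have "u' z - u' p = t * (u' q - u' p)"
    using affine_onD[OF u' X(2,1) t] by (simp add: w_def algebra_simps)
  then show ?thesis using \<open>u p < u q\<close> by (simp add: t_def field_simps)
qed

lemma affine_on_same_order_pos_affine:
  assumes "convex X" and u: "affine_on X u" and u': "affine_on X u'"
    and ord: "\<forall>x\<in>X. \<forall>y\<in>X. u y < u x \<longleftrightarrow> u' y < u' x"
    and "\<exists>x\<in>X. \<exists>y\<in>X. u x \<noteq> u y"
  shows "\<exists>a b. a > 0 \<and> (\<forall>x\<in>X. u' x = a * u x + b)"
proof -
  obtain p q where pq: "p \<in> X" "q \<in> X" "u p < u q"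
    using assms(5) by (metis linorder_neqE_linordered_idom)
  define a where "a = (u' q - u' p) / (u q - u p)"
  have "0 < a" using ord pq by (simp add: a_def)
  note cross = affine_on_same_order_cross_eq[OF assms(1-4)]
  have "u' z = a * u z + (u' p - a * u p)" if z: "z \<in> X" for z
  proof -
    have "(u' z - u' p) * (u q - u p) = (u z - u p) * (u' q - u' p)"
    proof -
      consider "u z < u p" | "u p \<le> u z" "u z \<le> u q" | "u q < u z" by linarith
      then show ?thesis
      proof cases
        case 1
        then show ?thesis using cross[OF z pq(2,1)] pq by (simp add: algebra_simps)
      next
        case 2
        then show ?thesis using cross[OF pq(1,2) z] pq by simp
      next
        case 3
        then show ?thesis using cross[OF pq(1) z pq(2)] pq by (simp add: algebra_simps)
      qed
    qed
    then have "u' z - u' p = (u z - u p) * (u' q - u' p) / (u q - u p)"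
      using pq by (simp add: eq_divide_eq)
    also have "\<dots> = a * (u z - u p)" by (simp add: a_def)
    finally show ?thesis by (simp add: algebra_simps)
  qed
  then show ?thesis using \<open>0 < a\<close> by blast
qed

lemma openin_unit_interval_meets_interior:
  assumes "openin (top_of_set {0..1::real}) S" and "a \<in> S"
  shows "\<exists>t\<in>S. 0 < t \<and> t < 1"
proof -
  obtain e where e: "e > 0" "\<And>t. t \<in> {0..1} \<Longrightarrow> dist t a < e \<Longrightarrow> t \<in> S"
    using assms unfolding openin_euclidean_subtopology_iff by blast
  define d where "d = min e (1/2) / 2"
  define t where "t = (if a \<le> 1/2 then a + d else a - d)"
  have "0 < d" "d < e" "d \<le> 1/4" using e by (auto simp: d_def)
  moreover have "a \<in> {0..1}" using assms openin_imp_subset by blast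
  ultimately have "0 < t" "t < 1" "dist t a < e" by (auto simp: t_def dist_real_def)
  then show ?thesis using e by auto
qed

lemma eq_iff_same_lower_bounds: "(\<And>t::real. t < a \<longleftrightarrow> t < b) \<Longrightarrow> a = b"
  by (metis less_irrefl linorder_neqE_linordered_idom)

lemma mix_diff:
  fixes a b c d :: "'a::real_vector"
  shows "(t *\<^sub>R a + (1 - t) *\<^sub>R c) - (t *\<^sub>R b + (1 - t) *\<^sub>R d) = t *\<^sub>R (a - b) + (1 - t) *\<^sub>R (c - d)"
  by (simp add: algebra_simps)

lemma scaled_diff_add:
  fixes a b c d :: "'a::real_vector"
  assumes "0 < l" and "0 < m"
  defines "t \<equiv> l / (l + m)"
  shows "l *\<^sub>R (a - b) + m *\<^sub>R (c - d)
           = (l + m) *\<^sub>R ((t *\<^sub>R a + (1 - t) *\<^sub>R c) - (t *\<^sub>R b + (1 - t) *\<^sub>R d))"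
proof -
  have "(l + m) * t = l" "(l + m) * (1 - t) = m" using assms by (auto simp: t_def field_simps)
  then show ?thesis by (simp add: mix_diff scaleR_add_right)
qed

lemma eq_of_same_threshold:
  fixes u :: "'a \<Rightarrow> real"
  assumes "0 < a" and iff: "\<And>x. x \<in> X \<Longrightarrow> a * u x + c < A \<longleftrightarrow> u x < B"
    and "B \<in> u ` X" and "(A - c) / a \<in> u ` X"
  shows "A = a * B + c"
proof -
  obtain x where x: "x \<in> X" "u x = B" using assms(3) by (auto simp: image_iff)
  obtain y where y: "y \<in> X" "u y = (A - c) / a" using assms(4) by (auto simp: image_iff)
  have "\<not> a * B + c < A" and "\<not> (A - c) / a < B"
    using iff[OF x(1)] iff[OF y(1)] x y \<open>0 < a\<close> by simp_all
  then have "A \<le> a * B + c" and "B * a \<le> A - c"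
    using \<open>0 < a\<close> by (simp_all add: not_less pos_le_divide_eq)
  then show ?thesis by (simp add: mult.commute)
qed

lemma openin_continuous_preimages:
  assumes "continuous_on S F" and "continuous_on S G" and "open A" and "open B"
  shows "openin (top_of_set S) {t\<in>S. F t \<in> A \<and> G t \<in> B}"
proof -
  have "{t\<in>S. F t \<in> A \<and> G t \<in> B} = (S \<inter> F -` A) \<inter> (S \<inter> G -` B)" by auto
  then show ?thesis
    using continuous_openin_preimage_gen[OF assms(1,3)] continuous_openin_preimage_gen[OF assms(2,4)]
    by (simp add: openin_Int)
qed

section \<open>Affine utility for a continuous independent weak order\<close>

locale mixture_order =
  fixes X :: "'x::real_vector set" and R :: "'x \<Rightarrow> 'x \<Rightarrow> bool"
  assumes convex: "convex X"
    and asym: "x \<in> X \<Longrightarrow> y \<in> X \<Longrightarrow> R x y \<Longrightarrow> \<not> R y x"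
    and negtrans: "x \<in> X \<Longrightarrow> y \<in> X \<Longrightarrow> z \<in> X \<Longrightarrow> R x z \<Longrightarrow> R x y \<or> R y z"
    and openin_above: "a \<in> X \<Longrightarrow> b \<in> X \<Longrightarrow> c \<in> X \<Longrightarrow>
      openin (top_of_set {0..1}) {t\<in>{0..1::real}. R (t *\<^sub>R a + (1 - t) *\<^sub>R b) c}"
    and openin_below: "a \<in> X \<Longrightarrow> b \<in> X \<Longrightarrow> c \<in> X \<Longrightarrow>
      openin (top_of_set {0..1}) {t\<in>{0..1::real}. R c (t *\<^sub>R a + (1 - t) *\<^sub>R b)}"
    and independence: "x \<in> X \<Longrightarrow> y \<in> X \<Longrightarrow> z \<in> X \<Longrightarrow> 0 < t \<Longrightarrow> t < 1 \<Longrightarrow>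
      R y z \<longleftrightarrow> R (t *\<^sub>R y + (1 - t) *\<^sub>R x) (t *\<^sub>R z + (1 - t) *\<^sub>R x)"
begin

lemma trans: "x \<in> X \<Longrightarrow> y \<in> X \<Longrightarrow> z \<in> X \<Longrightarrow> R x y \<Longrightarrow> R y z \<Longrightarrow> R x z"
  using negtrans[of x z y] asym[of y z] by blast

lemma mix_in: "a \<in> X \<Longrightarrow> b \<in> X \<Longrightarrow> 0 \<le> t \<Longrightarrow> t \<le> 1 \<Longrightarrow> t *\<^sub>R a + (1 - t) *\<^sub>R b \<in> X"
  using convex by (simp add: convexD)

lemma independence':
  assumes "x \<in> X" "y \<in> X" "z \<in> X" "0 < t" "t < 1"
  shows "R y z \<longleftrightarrow> R (t *\<^sub>R x + (1 - t) *\<^sub>R y) (t *\<^sub>R x + (1 - t) *\<^sub>R z)"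
  using independence[OF assms(1-3), of "1 - t"] assms(4,5) by (simp add: add.commute)

lemma mix_preferred:
  assumes X: "a \<in> X" "b \<in> X" "c \<in> X" "d \<in> X" and "R a b" "R c d" and t: "0 < t" "t < 1"
  shows "R (t *\<^sub>R a + (1 - t) *\<^sub>R c) (t *\<^sub>R b + (1 - t) *\<^sub>R d)"
proof -
  have "R (t *\<^sub>R a + (1 - t) *\<^sub>R c) (t *\<^sub>R b + (1 - t) *\<^sub>R c)"
    using independence[OF X(3,1,2) t] \<open>R a b\<close> by simp
  moreover have "R (t *\<^sub>R b + (1 - t) *\<^sub>R c) (t *\<^sub>R b + (1 - t) *\<^sub>R d)"
    using independence'[OF X(2,3,4) t] \<open>R c d\<close> by simp
  moreover have "t *\<^sub>R a + (1 - t) *\<^sub>R c \<in> X" "t *\<^sub>R b + (1 - t) *\<^sub>R c \<in> X"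
    "t *\<^sub>R b + (1 - t) *\<^sub>R d \<in> X"
    using mix_in X t by auto
  ultimately show ?thesis using trans by blast
qed

lemma preferred_mix_left:
  assumes "a \<in> X" "b \<in> X" "0 < t" "t \<le> 1"
  shows "R (t *\<^sub>R a + (1 - t) *\<^sub>R b) b \<longleftrightarrow> R a b"
proof -
  have "t *\<^sub>R b + (1 - t) *\<^sub>R b = b" by (simp add: algebra_simps)
  then show ?thesis using independence[OF assms(2,1,2), of t] assms(3,4) by (cases "t = 1") auto
qed

lemma preferred_mix_right:
  assumes "a \<in> X" "b \<in> X" "0 < t" "t \<le> 1"
  shows "R a (t *\<^sub>R b + (1 - t) *\<^sub>R a) \<longleftrightarrow> R a b"
proof -
  have "t *\<^sub>R a + (1 - t) *\<^sub>R a = a" by (simp add: algebra_simps)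
  then show ?thesis using independence[OF assms(1,1,2), of t] assms(3,4) by (cases "t = 1") auto
qed

lemma preferred_translate:
  assumes X: "a \<in> X" "b \<in> X" "c \<in> X" "d \<in> X" and "a - b = c - d"
  shows "R a b \<longleftrightarrow> R c d"
proof -
  have "(1/2) *\<^sub>R a + (1 - 1/2) *\<^sub>R d = (1/2) *\<^sub>R c + (1 - 1/2) *\<^sub>R b"
    using \<open>a - b = c - d\<close> by (simp add: algebra_simps flip: scaleR_add_right)
  then show ?thesis
    using independence[OF X(4,1,2), of "1/2"] independence[OF X(2,3,4), of "1/2"]
    by (simp add: add.commute)
qed

lemma preferred_scale:
  assumes X: "a \<in> X" "b \<in> X" "c \<in> X" "d \<in> X" and "0 < l" "0 < m"
    and eq: "l *\<^sub>R (a - b) = m *\<^sub>R (c - d)"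
  shows "R a b \<longleftrightarrow> R c d"
proof -
  have *: "R a b \<longleftrightarrow> R c d"
    if X: "a \<in> X" "b \<in> X" "c \<in> X" "d \<in> X" and "0 < l" "l \<le> m"
      and eq: "l *\<^sub>R (a - b) = m *\<^sub>R (c - d)" for a b c d l m
  proof -
    define k where "k = l / m"
    have k: "0 < k" "k \<le> 1" using that by (auto simp: k_def)
    have "c - d = (1 / m) *\<^sub>R (l *\<^sub>R (a - b))" using eq \<open>0 < l\<close> \<open>l \<le> m\<close> by simp
    also have "\<dots> = (k *\<^sub>R a + (1 - k) *\<^sub>R b) - b" by (simp add: k_def algebra_simps)
    finally have "R c d \<longleftrightarrow> R (k *\<^sub>R a + (1 - k) *\<^sub>R b) b"
      using preferred_translate[OF X(3,4) mix_in[OF X(1,2)] X(2)] k by simp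
    also have "\<dots> \<longleftrightarrow> R a b" using preferred_mix_left[OF X(1,2) k] .
    finally show ?thesis ..
  qed
  show ?thesis
    using *[OF X \<open>0 < l\<close> _ eq] *[OF X(3,4,1,2) \<open>0 < m\<close> _ eq[symmetric]]
    by (cases "l \<le> m") auto
qed

(* Preference between two points only depends on the ray of their difference (preferred_scale),
   so it is encoded by the cone of strictly preferred directions. *)
definition pos_dir :: "'x \<Rightarrow> bool" where
  "pos_dir v \<longleftrightarrow> (\<exists>l>0. \<exists>a\<in>X. \<exists>b\<in>X. R a b \<and> v = l *\<^sub>R (a - b))"

definition dirs :: "'x set" where
  "dirs = {l *\<^sub>R (a - b) | l a b. 0 < l \<and> a \<in> X \<and> b \<in> X}"

lemma pos_dir_diff_iff:
  assumes "a \<in> X" "b \<in> X" shows "pos_dir (a - b) \<longleftrightarrow> R a b"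
proof
  assume "pos_dir (a - b)"
  then obtain l c d where "0 < l" "c \<in> X" "d \<in> X" "R c d" "l *\<^sub>R (c - d) = 1 *\<^sub>R (a - b)"
    unfolding pos_dir_def by auto
  then show "R a b" using preferred_scale[of c d a b l 1] assms by simp
next
  assume "R a b"
  moreover have "a - b = 1 *\<^sub>R (a - b)" by simp
  ultimately show "pos_dir (a - b)" unfolding pos_dir_def using assms zero_less_one by blast
qed

lemma pos_dir_scaleR_iff:
  assumes "0 < c" shows "pos_dir (c *\<^sub>R v) \<longleftrightarrow> pos_dir v"
proof
  assume "pos_dir v"
  then obtain l a b where "0 < l" "a \<in> X" "b \<in> X" "R a b" "v = l *\<^sub>R (a - b)"
    unfolding pos_dir_def by blast
  moreover have "0 < c * l" using assms \<open>0 < l\<close> by simp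
  ultimately show "pos_dir (c *\<^sub>R v)" unfolding pos_dir_def by auto
next
  assume "pos_dir (c *\<^sub>R v)"
  then obtain l a b where "0 < l" "a \<in> X" "b \<in> X" "R a b" "c *\<^sub>R v = l *\<^sub>R (a - b)"
    unfolding pos_dir_def by blast
  moreover have "v = (1 / c) *\<^sub>R (c *\<^sub>R v)" using assms by simp
  moreover have "0 < l / c" using \<open>0 < l\<close> assms by simp
  ultimately show "pos_dir v" unfolding pos_dir_def by auto
qed

lemma diff_in_dirs:
  assumes "a \<in> X" "b \<in> X" shows "a - b \<in> dirs"
proof -
  have "a - b = 1 *\<^sub>R (a - b)" by simp
  then show ?thesis unfolding dirs_def using assms zero_less_one by blast
qed

lemma pos_dir_add:
  assumes "pos_dir v" "pos_dir w" shows "pos_dir (v + w)"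
proof -
  obtain l a b where ab: "0 < l" "a \<in> X" "b \<in> X" "R a b" "v = l *\<^sub>R (a - b)"
    using assms(1) unfolding pos_dir_def by blast
  obtain m c d where cd: "0 < m" "c \<in> X" "d \<in> X" "R c d" "w = m *\<^sub>R (c - d)"
    using assms(2) unfolding pos_dir_def by blast
  define t where "t = l / (l + m)"
  have t: "0 < t" "t < 1" using ab cd by (auto simp: t_def)
  let ?a = "t *\<^sub>R a + (1 - t) *\<^sub>R c" and ?b = "t *\<^sub>R b + (1 - t) *\<^sub>R d"
  have "R ?a ?b" using mix_preferred ab cd t by blast
  moreover have "?a \<in> X" "?b \<in> X" using ab cd t mix_in by auto
  moreover have "v + w = (l + m) *\<^sub>R (?a - ?b)"
    unfolding ab(5) cd(5) scaled_diff_add[OF ab(1) cd(1)] t_def ..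
  moreover have "0 < l + m" using ab cd by simp
  ultimately show ?thesis unfolding pos_dir_def by blast
qed

lemma pos_dir_split:
  assumes "v \<in> dirs" "w \<in> dirs" "pos_dir (v + w)" shows "pos_dir v \<or> pos_dir w"
proof -
  obtain l a b where ab: "0 < l" "a \<in> X" "b \<in> X" "v = l *\<^sub>R (a - b)"
    using assms(1) unfolding dirs_def by blast
  obtain m c d where cd: "0 < m" "c \<in> X" "d \<in> X" "w = m *\<^sub>R (c - d)"
    using assms(2) unfolding dirs_def by blast
  define t where "t = l / (l + m)"
  have t: "0 < t" "t < 1" using ab cd by (auto simp: t_def)
  let ?a = "t *\<^sub>R a + (1 - t) *\<^sub>R c" and ?b = "t *\<^sub>R b + (1 - t) *\<^sub>R d"
    and ?m = "t *\<^sub>R b + (1 - t) *\<^sub>R c"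
  have X: "?a \<in> X" "?b \<in> X" "?m \<in> X" using ab cd t mix_in by auto
  have "pos_dir ((l + m) *\<^sub>R (?a - ?b))"
    using assms(3) unfolding ab(4) cd(4) scaled_diff_add[OF ab(1) cd(1)] t_def .
  then have "R ?a ?b" using pos_dir_scaleR_iff pos_dir_diff_iff X ab cd by simp
  then have "R ?a ?m \<or> R ?m ?b" using negtrans X by blast
  then have "R a b \<or> R c d"
    using independence[OF cd(2) ab(2,3) t] independence'[OF ab(3) cd(2,3) t] by blast
  then show ?thesis unfolding pos_dir_def using ab cd by blast
qed

lemma dirs_add: assumes "v \<in> dirs" "w \<in> dirs" shows "v + w \<in> dirs"
proof -
  obtain l a b where ab: "0 < l" "a \<in> X" "b \<in> X" "v = l *\<^sub>R (a - b)"
    using assms(1) unfolding dirs_def by blast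
  obtain m c d where cd: "0 < m" "c \<in> X" "d \<in> X" "w = m *\<^sub>R (c - d)"
    using assms(2) unfolding dirs_def by blast
  define t where "t = l / (l + m)"
  have "0 < t" "t < 1" using ab cd by (auto simp: t_def)
  then have "t *\<^sub>R a + (1 - t) *\<^sub>R c \<in> X" "t *\<^sub>R b + (1 - t) *\<^sub>R d \<in> X"
    using ab cd mix_in by auto
  moreover have "v + w = (l + m) *\<^sub>R ((t *\<^sub>R a + (1 - t) *\<^sub>R c) - (t *\<^sub>R b + (1 - t) *\<^sub>R d))"
    unfolding ab(4) cd(4) scaled_diff_add[OF ab(1) cd(1)] t_def ..
  moreover have "0 < l + m" using ab cd by simp
  ultimately show ?thesis unfolding dirs_def by blast
qed

lemma dirs_scaleR: assumes "v \<in> dirs" shows "c *\<^sub>R v \<in> dirs"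
proof -
  obtain l a b where ab: "0 < l" "a \<in> X" "b \<in> X" "v = l *\<^sub>R (a - b)"
    using assms unfolding dirs_def by blast
  consider "0 < c" | "c = 0" | "c < 0" by linarith
  then show ?thesis
  proof cases
    case 1
    have "c *\<^sub>R v = (c * l) *\<^sub>R (a - b)" "0 < c * l" using 1 ab by auto
    then show ?thesis using ab unfolding dirs_def by blast
  next
    case 2 then show ?thesis using diff_in_dirs[OF ab(2,2)] by simp
  next
    case 3
    have "c *\<^sub>R v = (- c * l) *\<^sub>R (b - a)" by (simp add: ab(4) algebra_simps)
    moreover have "0 < - c * l" using mult_neg_pos[OF 3 ab(1)] by simp
    ultimately show ?thesis using ab unfolding dirs_def by blast
  qed
qed

lemma not_pos_dir_zero: "\<not> pos_dir 0"
proof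
  assume "pos_dir 0"
  then obtain l a b where "0 < l" "a \<in> X" "R a b" "0 = l *\<^sub>R (a - b)" unfolding pos_dir_def by blast
  then show False using asym[of a a] by simp
qed

lemma pos_dir_asym: "pos_dir v \<Longrightarrow> \<not> pos_dir (- v)"
  using pos_dir_add[of v "- v"] not_pos_dir_zero by auto

lemma preferred_perturb:
  assumes X: "a \<in> X" "b \<in> X" "p \<in> X" "q \<in> X" and "R a b"
  shows "\<exists>t. 0 < t \<and> t < 1 \<and> R (t *\<^sub>R p + (1 - t) *\<^sub>R a) (t *\<^sub>R q + (1 - t) *\<^sub>R b)"
proof -
  let ?m = "(1/2) *\<^sub>R a + (1/2) *\<^sub>R b"
  have "?m \<in> X" using mix_in[OF X(1,2), of "1/2"] by simp
  moreover have "R a ?m"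
    using preferred_mix_right[OF X(1,2), of "1/2"] \<open>R a b\<close> by (simp add: add.commute)
  moreover have "R ?m b" using preferred_mix_left[OF X(1,2), of "1/2"] \<open>R a b\<close> by simp
  ultimately have m: "?m \<in> X" "R a ?m" "R ?m b" by blast+
  let ?S = "{t\<in>{0..1}. R (t *\<^sub>R p + (1 - t) *\<^sub>R a) ?m} \<inter> {t\<in>{0..1}. R ?m (t *\<^sub>R q + (1 - t) *\<^sub>R b)}"
  have "openin (top_of_set {0..1}) ?S"
    using openin_above[OF X(3,1) m(1)] openin_below[OF X(4,2) m(1)] by (rule openin_Int)
  moreover have "0 \<in> ?S" using m by simp
  ultimately obtain t where "t \<in> ?S" "0 < t" "t < 1"
    using openin_unit_interval_meets_interior by blast
  then show ?thesis using trans[OF mix_in[OF X(3,1)] m(1) mix_in[OF X(4,2)]] by auto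
qed

end

locale mixture_order_ref = mixture_order +
  fixes x0 x1
  assumes x0: "x0 \<in> X" and x1: "x1 \<in> X" and x1_x0: "R x1 x0"
begin

abbreviation e where "e \<equiv> x1 - x0"

lemma pos_dir_e: "pos_dir e"
  using pos_dir_diff_iff x0 x1 x1_x0 by simp

lemma pos_dir_scaleR_e_iff: "pos_dir (c *\<^sub>R e) \<longleftrightarrow> 0 < c"
proof (cases "0 < c")
  case True
  then show ?thesis using pos_dir_scaleR_iff pos_dir_e by simp
next
  case False
  then consider "c = 0" | "0 < - c" by linarith
  then show ?thesis
  proof cases
    case 1
    then show ?thesis using not_pos_dir_zero by simp
  next
    case 2
    have "c *\<^sub>R e = (- c) *\<^sub>R (- e)" by (simp only: scaleR_minus_left scaleR_minus_right minus_minus)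
    then show ?thesis using pos_dir_scaleR_iff[OF 2] pos_dir_asym[OF pos_dir_e] False by simp
  qed
qed

lemma pos_dir_diff_scaleR_e_mono:
  assumes "pos_dir (v - t *\<^sub>R e)" and "s \<le> t"
  shows "pos_dir (v - s *\<^sub>R e)"
proof (cases "s = t")
  case False
  then have "pos_dir ((v - t *\<^sub>R e) + (t - s) *\<^sub>R e)"
    using assms pos_dir_add pos_dir_scaleR_e_iff by simp
  then show ?thesis by (simp add: algebra_simps)
qed (use assms in simp)

lemma pos_dir_open:
  assumes "pos_dir v" shows "\<exists>\<epsilon>>0. pos_dir (v - \<epsilon> *\<^sub>R e)"
proof -
  obtain l a b where ab: "0 < l" "a \<in> X" "b \<in> X" "R a b" "v = l *\<^sub>R (a - b)"
    using assms unfolding pos_dir_def by blast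
  obtain t where t: "0 < t" "t < 1" and "R (t *\<^sub>R x0 + (1 - t) *\<^sub>R a) (t *\<^sub>R x1 + (1 - t) *\<^sub>R b)"
    using preferred_perturb[OF ab(2,3) x0 x1 ab(4)] by blast
  moreover have "t *\<^sub>R x0 + (1 - t) *\<^sub>R a \<in> X" "t *\<^sub>R x1 + (1 - t) *\<^sub>R b \<in> X"
    using mix_in x0 x1 ab t by auto
  ultimately have "pos_dir ((t *\<^sub>R x0 + (1 - t) *\<^sub>R a) - (t *\<^sub>R x1 + (1 - t) *\<^sub>R b))"
    using pos_dir_diff_iff by blast
  then have "pos_dir (t *\<^sub>R (x0 - x1) + (1 - t) *\<^sub>R (a - b))" by (simp only: mix_diff)
  then have "pos_dir ((l / (1 - t)) *\<^sub>R (t *\<^sub>R (x0 - x1) + (1 - t) *\<^sub>R (a - b)))"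
    using pos_dir_scaleR_iff ab t by simp
  moreover have "(l / (1 - t)) *\<^sub>R (t *\<^sub>R (x0 - x1) + (1 - t) *\<^sub>R (a - b)) = v - (l * t / (1 - t)) *\<^sub>R e"
  proof -
    have "(l / (1 - t)) * (1 - t) = l" using t by simp
    then show ?thesis by (simp add: ab(5) scaleR_add_right scaleR_diff_right)
  qed
  ultimately show ?thesis using ab t by (intro exI[of _ "l * t / (1 - t)"]) simp
qed

lemma pos_dir_add_scaleR_e_exists:
  assumes "v \<in> dirs" shows "\<exists>s. pos_dir (v + s *\<^sub>R e)"
proof -
  obtain l a b where ab: "0 < l" "a \<in> X" "b \<in> X" "v = l *\<^sub>R (a - b)"
    using assms unfolding dirs_def by blast
  obtain t where t: "0 < t" "t < 1" and "R (t *\<^sub>R a + (1 - t) *\<^sub>R x1) (t *\<^sub>R b + (1 - t) *\<^sub>R x0)"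
    using preferred_perturb[OF x1 x0 ab(2,3) x1_x0] by blast
  moreover have "t *\<^sub>R a + (1 - t) *\<^sub>R x1 \<in> X" "t *\<^sub>R b + (1 - t) *\<^sub>R x0 \<in> X"
    using mix_in x0 x1 ab t by auto
  ultimately have "pos_dir ((t *\<^sub>R a + (1 - t) *\<^sub>R x1) - (t *\<^sub>R b + (1 - t) *\<^sub>R x0))"
    using pos_dir_diff_iff by blast
  then have "pos_dir (t *\<^sub>R (a - b) + (1 - t) *\<^sub>R e)" by (simp only: mix_diff)
  then have "pos_dir ((l / t) *\<^sub>R (t *\<^sub>R (a - b) + (1 - t) *\<^sub>R e))"
    using pos_dir_scaleR_iff ab t by simp
  moreover have "(l / t) *\<^sub>R (t *\<^sub>R (a - b) + (1 - t) *\<^sub>R e) = v + (l * (1 - t) / t) *\<^sub>R e"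
    using t by (simp add: ab(4) scaleR_add_right)
  ultimately have "pos_dir (v + (l * (1 - t) / t) *\<^sub>R e)" by simp
  then show ?thesis ..
qed

lemma diff_scaleR_e_in_dirs: "v \<in> dirs \<Longrightarrow> v - c *\<^sub>R e \<in> dirs"
  using dirs_add[OF _ dirs_scaleR[OF diff_in_dirs[OF x1 x0], of "- c"]] by simp

definition dir_value :: "'a \<Rightarrow> real" where
  "dir_value v = Sup {t. pos_dir (v - t *\<^sub>R e)}"

lemma less_dir_value_iff:
  assumes v: "v \<in> dirs" shows "t < dir_value v \<longleftrightarrow> pos_dir (v - t *\<^sub>R e)"
proof -
  obtain s where "pos_dir (v + s *\<^sub>R e)" using pos_dir_add_scaleR_e_exists[OF v] by blast
  then have "pos_dir (v - (- s) *\<^sub>R e)" by simp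
  then have ne: "{t. pos_dir (v - t *\<^sub>R e)} \<noteq> {}" by blast
  obtain s' where s': "pos_dir (- v + s' *\<^sub>R e)"
    using pos_dir_add_scaleR_e_exists[OF dirs_scaleR[OF v, of "- 1"]] by auto
  have bdd: "bdd_above {t. pos_dir (v - t *\<^sub>R e)}"
  proof (rule bdd_aboveI)
    fix t assume "t \<in> {t. pos_dir (v - t *\<^sub>R e)}"
    then have "pos_dir ((v - t *\<^sub>R e) + (- v + s' *\<^sub>R e))" using pos_dir_add s' by blast
    then have "pos_dir ((s' - t) *\<^sub>R e)" by (simp add: algebra_simps)
    then show "t \<le> s'" using pos_dir_scaleR_e_iff by simp
  qed
  show ?thesis
  proof
    assume "t < dir_value v"
    then obtain t' where "pos_dir (v - t' *\<^sub>R e)" "t < t'"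
      unfolding dir_value_def using less_cSup_iff[OF ne bdd] by auto
    then show "pos_dir (v - t *\<^sub>R e)" using pos_dir_diff_scaleR_e_mono by simp
  next
    assume "pos_dir (v - t *\<^sub>R e)"
    then obtain \<epsilon> where "0 < \<epsilon>" "pos_dir ((v - t *\<^sub>R e) - \<epsilon> *\<^sub>R e)" using pos_dir_open by blast
    then have "pos_dir (v - (t + \<epsilon>) *\<^sub>R e)" by (simp add: algebra_simps)
    then have "t + \<epsilon> \<le> dir_value v" unfolding dir_value_def using cSup_upper[OF _ bdd] by blast
    then show "t < dir_value v" using \<open>0 < \<epsilon>\<close> by simp
  qed
qed

lemma dir_value_pos_iff: "v \<in> dirs \<Longrightarrow> 0 < dir_value v \<longleftrightarrow> pos_dir v"
  using less_dir_value_iff[of v 0] by simp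

lemma dir_value_add:
  assumes v: "v \<in> dirs" and w: "w \<in> dirs" shows "dir_value (v + w) = dir_value v + dir_value w"
proof (rule eq_iff_same_lower_bounds)
  fix t
  have vw: "v + w - t *\<^sub>R e = (v - dir_value v *\<^sub>R e) + (w - (t - dir_value v) *\<^sub>R e)"
    by (simp add: algebra_simps)
  show "t < dir_value (v + w) \<longleftrightarrow> t < dir_value v + dir_value w"
  proof
    assume "t < dir_value (v + w)"
    then have "pos_dir ((v - dir_value v *\<^sub>R e) + (w - (t - dir_value v) *\<^sub>R e))"
      using less_dir_value_iff[OF dirs_add[OF v w]] vw by simp
    then have "pos_dir (v - dir_value v *\<^sub>R e) \<or> pos_dir (w - (t - dir_value v) *\<^sub>R e)"
      using pos_dir_split[OF diff_scaleR_e_in_dirs[OF v] diff_scaleR_e_in_dirs[OF w]] by blast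
    then show "t < dir_value v + dir_value w"
      using less_dir_value_iff[OF v, of "dir_value v"] less_dir_value_iff[OF w, of "t - dir_value v"]
      by linarith
  next
    assume "t < dir_value v + dir_value w"
    define r where "r = (dir_value v + t - dir_value w) / 2"
    have "r < dir_value v" "t - r < dir_value w"
      using \<open>t < dir_value v + dir_value w\<close> by (simp_all add: r_def field_simps)
    then have "pos_dir (v - r *\<^sub>R e)" and "pos_dir (w - (t - r) *\<^sub>R e)"
      using less_dir_value_iff v w by auto
    from pos_dir_add[OF this] have "pos_dir (v + w - t *\<^sub>R e)" by (simp add: algebra_simps)
    then show "t < dir_value (v + w)" using less_dir_value_iff[OF dirs_add[OF v w]] by simp
  qed
qed

lemma dir_value_scaleR:
  assumes v: "v \<in> dirs" and "0 \<le> c" shows "dir_value (c *\<^sub>R v) = c * dir_value v"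
proof (cases "c = 0")
  case True
  have "0 \<in> dirs" using diff_in_dirs[OF x0 x0] by simp
  then show ?thesis using dir_value_add[of 0 0] True by simp
next
  case False
  then have c: "0 < c" using \<open>0 \<le> c\<close> by simp
  show ?thesis
  proof (rule eq_iff_same_lower_bounds)
    fix t
    have "c *\<^sub>R v - t *\<^sub>R e = c *\<^sub>R (v - (t / c) *\<^sub>R e)" using c by (simp add: algebra_simps)
    then have "t < dir_value (c *\<^sub>R v) \<longleftrightarrow> pos_dir (v - (t / c) *\<^sub>R e)"
      using less_dir_value_iff[OF dirs_scaleR[OF v]] pos_dir_scaleR_iff[OF c] by simp
    also have "\<dots> \<longleftrightarrow> t < c * dir_value v"
      using less_dir_value_iff[OF v, of "t / c"] c by (simp add: field_simps)
    finally show "t < dir_value (c *\<^sub>R v) \<longleftrightarrow> t < c * dir_value v" .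
  qed
qed

definition utility :: "'a \<Rightarrow> real" where
  "utility x = dir_value (x - x0)"

lemma affine_on_utility: "affine_on X utility"
  unfolding affine_on_def
proof (intro ballI)
  fix x y and t :: real assume xy: "x \<in> X" "y \<in> X" and t: "t \<in> {0..1}"
  have "t *\<^sub>R x + (1 - t) *\<^sub>R y - x0 = t *\<^sub>R (x - x0) + (1 - t) *\<^sub>R (y - x0)"
    by (simp add: algebra_simps)
  then show "utility (t *\<^sub>R x + (1 - t) *\<^sub>R y) = t * utility x + (1 - t) * utility y"
    using xy t x0 by (simp add: utility_def dir_value_add dir_value_scaleR dirs_scaleR diff_in_dirs)
qed

lemma preferred_iff_utility_less:
  assumes "x \<in> X" "y \<in> X" shows "R x y \<longleftrightarrow> utility y < utility x"
proof -
  have "utility x = dir_value (x - y) + utility y"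
    using dir_value_add[OF diff_in_dirs[OF assms] diff_in_dirs[OF assms(2) x0]]
    by (simp add: utility_def)
  then show ?thesis using dir_value_pos_iff[OF diff_in_dirs[OF assms]] pos_dir_diff_iff[OF assms]
    by simp
qed

end

lemma (in mixture_order) exists_affine_utility:
  assumes "\<exists>x\<in>X. \<exists>y\<in>X. R x y"
  shows "\<exists>U. affine_on X U \<and> (\<forall>x\<in>X. \<forall>y\<in>X. R x y \<longleftrightarrow> U y < U x)"
proof -
  obtain x1 x0 where "x1 \<in> X" "x0 \<in> X" "R x1 x0" using assms by blast
  then interpret mixture_order_ref X R x0 x1 by unfold_locales
  show ?thesis using affine_on_utility preferred_iff_utility_less by blast
qed

section \<open>Functionals on acts and their extension to simple functions\<close>

locale affine_utility =
  fixes \<Sigma> :: "'s set set" and X :: "'x::real_vector set" and u :: "'x \<Rightarrow> real"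
  assumes algebra: "algebra UNIV \<Sigma>" and convex: "convex X" and affine: "affine_on X u"
    and nonconstant: "\<exists>x\<in>X. \<exists>y\<in>X. u x \<noteq> u y"
begin

lemma cst_in: "x \<in> X \<Longrightarrow> cst x \<in> acts \<Sigma> X"
  using cst_in_acts[OF algebra] .

lemma mix_in: "f \<in> acts \<Sigma> X \<Longrightarrow> g \<in> acts \<Sigma> X \<Longrightarrow> 0 \<le> t \<Longrightarrow> t \<le> 1 \<Longrightarrow> mix t f g \<in> acts \<Sigma> X"
  using mix_in_acts[OF algebra convex] .

lemma point_mix_in: "x \<in> X \<Longrightarrow> y \<in> X \<Longrightarrow> 0 \<le> t \<Longrightarrow> t \<le> 1 \<Longrightarrow> t *\<^sub>R x + (1 - t) *\<^sub>R y \<in> X"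
  using convex by (simp add: convexD)

lemma utility_mix:
  "f \<in> acts \<Sigma> X \<Longrightarrow> g \<in> acts \<Sigma> X \<Longrightarrow> 0 \<le> t \<Longrightarrow> t \<le> 1 \<Longrightarrow>
    u (mix t f g s) = t * u (f s) + (1 - t) * u (g s)"
  using affine_onD[OF affine acts_in_X acts_in_X] by (simp add: mix_def)

lemma utility_between: "x \<in> X \<Longrightarrow> y \<in> X \<Longrightarrow> u x \<le> r \<Longrightarrow> r \<le> u y \<Longrightarrow> \<exists>z\<in>X. u z = r"
  using affine_on_ivt[OF convex affine] .

lemma utility_comp_in_B0: "f \<in> acts \<Sigma> X \<Longrightarrow> u \<circ> f \<in> B0 \<Sigma>"
  using comp_acts_in_B0[OF algebra] .

lemma finite_utility_range: "f \<in> acts \<Sigma> X \<Longrightarrow> finite (range (u \<circ> f))"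
  using utility_comp_in_B0 by (simp add: B0_def)

definition worst :: "('s \<Rightarrow> 'x) \<Rightarrow> real" where
  "worst f = Min (range (u \<circ> f))"

definition best :: "('s \<Rightarrow> 'x) \<Rightarrow> real" where
  "best f = Max (range (u \<circ> f))"

lemma worst_le: "f \<in> acts \<Sigma> X \<Longrightarrow> worst f \<le> u (f s)"
  using finite_utility_range by (simp add: worst_def)

lemma best_ge: "f \<in> acts \<Sigma> X \<Longrightarrow> u (f s) \<le> best f"
  using finite_utility_range by (simp add: best_def)

lemma worst_attained: "f \<in> acts \<Sigma> X \<Longrightarrow> \<exists>s. u (f s) = worst f"
  using Min_in[OF finite_utility_range] by (fastforce simp: worst_def)

lemma best_attained: "f \<in> acts \<Sigma> X \<Longrightarrow> \<exists>s. u (f s) = best f"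
  using Max_in[OF finite_utility_range] by (fastforce simp: best_def)

lemma worst_le_best: "f \<in> acts \<Sigma> X \<Longrightarrow> worst f \<le> best f"
  using worst_le best_ge order_trans by blast

lemma utility_attained:
  assumes "f \<in> acts \<Sigma> X" and "worst f \<le> r" and "r \<le> best f"
  shows "\<exists>x\<in>X. u x = r"
proof -
  obtain s s' where "u (f s) = worst f" "u (f s') = best f"
    using worst_attained best_attained assms(1) by blast
  then show ?thesis using affine_on_ivt[OF convex affine] acts_in_X[OF assms(1)] assms(2,3) by metis
qed

lemma exists_acts_pos_affine:
  assumes "\<phi> \<in> B0 \<Sigma>" and "\<psi> \<in> B0 \<Sigma>"
  obtains a b f g where "0 < a" and "f \<in> acts \<Sigma> X" and "g \<in> acts \<Sigma> X"
    and "u \<circ> f = (\<lambda>s. a * \<phi> s + b)" and "u \<circ> g = (\<lambda>s. a * \<psi> s + b)"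
proof -
  obtain y0 y1 where y: "y0 \<in> X" "y1 \<in> X" "u y0 < u y1"
    using nonconstant by (metis linorder_neqE_linordered_idom)
  define m where "m = min (Min (range \<phi>)) (Min (range \<psi>))"
  define M where "M = max (Max (range \<phi>)) (Max (range \<psi>))"
  have bounds: "m \<le> \<phi> s" "\<phi> s \<le> M" "m \<le> \<psi> s" "\<psi> s \<le> M" for s
    using assms by (auto simp: B0_def m_def M_def intro: min.coboundedI1 min.coboundedI2
        max.coboundedI1 max.coboundedI2)
  then have "m \<le> M" by (meson order_trans)
  define G where "G r = ((r - m) / (M - m + 1)) *\<^sub>R y1 + (1 - (r - m) / (M - m + 1)) *\<^sub>R y0" for r
  define a where "a = (u y1 - u y0) / (M - m + 1)"
  have "0 < a" using y \<open>m \<le> M\<close> by (simp add: a_def)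
  have act: "G \<circ> \<theta> \<in> acts \<Sigma> X \<and> u \<circ> (G \<circ> \<theta>) = (\<lambda>s. a * \<theta> s + (u y0 - a * m))"
    if "\<theta> \<in> B0 \<Sigma>" and "\<And>s. m \<le> \<theta> s \<and> \<theta> s \<le> M" for \<theta>
  proof -
    have t: "0 \<le> (\<theta> s - m) / (M - m + 1)" "(\<theta> s - m) / (M - m + 1) \<le> 1" for s
      using that(2)[of s] by (auto simp: field_simps)
    then have "G (\<theta> s) \<in> X" for s using point_mix_in y by (simp add: G_def)
    then have "G \<circ> \<theta> \<in> acts \<Sigma> X" using that(1) by (intro acts_comp[OF algebra]) (auto simp: B0_def)
    moreover have "u (G (\<theta> s)) = a * \<theta> s + (u y0 - a * m)" for s
      using affine_onD[OF affine y(2,1) t[of s]] \<open>m \<le> M\<close>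
      by (simp add: G_def a_def field_simps)
    ultimately show ?thesis by auto
  qed
  show ?thesis using that[OF \<open>0 < a\<close> conjunct1[OF act] conjunct1[OF act] conjunct2[OF act]
      conjunct2[OF act]] assms bounds by blast
qed

definition pos_affine_equivariant :: "(('s \<Rightarrow> 'x) \<Rightarrow> real) \<Rightarrow> bool" where
  "pos_affine_equivariant F \<longleftrightarrow> (\<forall>f\<in>acts \<Sigma> X. \<forall>g\<in>acts \<Sigma> X. \<forall>a>0. \<forall>b.
     u \<circ> g = (\<lambda>s. a * u (f s) + b) \<longrightarrow> F g = a * F f + b)"

lemma pos_affine_equivariantD:
  "pos_affine_equivariant F \<Longrightarrow> f \<in> acts \<Sigma> X \<Longrightarrow> g \<in> acts \<Sigma> X \<Longrightarrow> 0 < a \<Longrightarrow>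
    u \<circ> g = (\<lambda>s. a * u (f s) + b) \<Longrightarrow> F g = a * F f + b"
  unfolding pos_affine_equivariant_def by blast

lemma pos_affine_equivariant_const:
  assumes "pos_affine_equivariant F" and "f \<in> acts \<Sigma> X" and "u \<circ> f = (\<lambda>_. c)"
  shows "F f = c"
proof -
  have "u \<circ> f = (\<lambda>s. 2 * u (f s) + - c)" using assms(3) by (simp add: fun_eq_iff)
  from pos_affine_equivariantD[OF assms(1,2,2) _ this] have "F f = 2 * F f + - c" by simp
  then show ?thesis by simp
qed

(* Well defined for equivariant F, because every simple function is a positive affine image of
   some utility profile u o f (exists_acts_pos_affine). *)
definition extend :: "(('s \<Rightarrow> 'x) \<Rightarrow> real) \<Rightarrow> ('s \<Rightarrow> real) \<Rightarrow> real" where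
  "extend F \<phi> = (SOME r. \<exists>a>0. \<exists>b. \<exists>f\<in>acts \<Sigma> X. u \<circ> f = (\<lambda>s. a * \<phi> s + b) \<and> r = (F f - b) / a)"

lemma extend_eq:
  assumes F: "pos_affine_equivariant F"
    and "0 < a" and f: "f \<in> acts \<Sigma> X" and uf: "u \<circ> f = (\<lambda>s. a * \<phi> s + b)"
  shows "extend F \<phi> = (F f - b) / a"
proof -
  let ?P = "\<lambda>r. \<exists>a>0. \<exists>b. \<exists>f\<in>acts \<Sigma> X. u \<circ> f = (\<lambda>s. a * \<phi> s + b) \<and> r = (F f - b) / a"
  have "?P ((F f - b) / a)" using assms by blast
  then have "?P (extend F \<phi>)" unfolding extend_def by (rule someI)
  then obtain a' b' f' where a': "0 < a'" and f': "f' \<in> acts \<Sigma> X"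
    and uf': "u \<circ> f' = (\<lambda>s. a' * \<phi> s + b')" and eq: "extend F \<phi> = (F f' - b') / a'"
    by blast
  have "u \<circ> f' = (\<lambda>s. (a' / a) * u (f s) + (b' - a' * b / a))"
  proof
    fix s
    have "u (f s) = a * \<phi> s + b" "u (f' s) = a' * \<phi> s + b'"
      using fun_cong[OF uf, of s] fun_cong[OF uf', of s] by simp_all
    then show "(u \<circ> f') s = (a' / a) * u (f s) + (b' - a' * b / a)"
      using \<open>0 < a\<close> by (simp add: field_simps)
  qed
  from pos_affine_equivariantD[OF F f f' _ this] have "F f' = (a' / a) * F f + (b' - a' * b / a)"
    using a' \<open>0 < a\<close> by simp
  then have "F f' - b' = (a' / a) * (F f - b)" by (simp add: algebra_simps)
  then show ?thesis using eq a' \<open>0 < a\<close> by simp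
qed

lemma extend_comp: "pos_affine_equivariant F \<Longrightarrow> f \<in> acts \<Sigma> X \<Longrightarrow> extend F (u \<circ> f) = F f"
  using extend_eq[of F 1 f "u \<circ> f" 0] by (simp add: comp_def)

lemma extend_const:
  assumes F: "pos_affine_equivariant F" shows "extend F (\<lambda>_. c) = c"
proof -
  obtain a b f where "0 < a" "f \<in> acts \<Sigma> X" "u \<circ> f = (\<lambda>s. a * c + b)"
    using exists_acts_pos_affine[OF B0_const[OF algebra] B0_const[OF algebra]] by metis
  then show ?thesis using extend_eq[OF F] pos_affine_equivariant_const[OF F] by simp
qed

lemma extend_pos_affine:
  assumes F: "pos_affine_equivariant F" and "\<phi> \<in> B0 \<Sigma>" and "0 < c"
  shows "extend F (\<lambda>s. c * \<phi> s + d) = c * extend F \<phi> + d"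
proof -
  obtain a b f where "0 < a" and f: "f \<in> acts \<Sigma> X" and uf: "u \<circ> f = (\<lambda>s. a * \<phi> s + b)"
    using exists_acts_pos_affine[OF assms(2,2)] by metis
  have "u \<circ> f = (\<lambda>s. (a / c) * (c * \<phi> s + d) + (b - a * d / c))"
    using uf \<open>0 < c\<close> by (simp add: fun_eq_iff field_simps)
  from extend_eq[OF F _ f this] have "extend F (\<lambda>s. c * \<phi> s + d) = (F f - (b - a * d / c)) / (a / c)"
    using \<open>0 < a\<close> \<open>0 < c\<close> by simp
  moreover have "extend F \<phi> = (F f - b) / a" using extend_eq[OF F \<open>0 < a\<close> f uf] .
  moreover have "(F f - (b - a * d / c)) / (a / c) = c * ((F f - b) / a) + d"
    using \<open>0 < a\<close> \<open>0 < c\<close> by (simp add: field_simps)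
  ultimately show ?thesis by simp
qed

lemma constant_linear_extend:
  assumes F: "pos_affine_equivariant F" shows "constant_linear \<Sigma> (extend F)"
  unfolding constant_linear_def
proof (intro ballI allI impI)
  fix \<phi> and c d :: real assume "\<phi> \<in> B0 \<Sigma>" "0 \<le> c"
  show "extend F (\<lambda>s. c * \<phi> s + d) = c * extend F \<phi> + d"
  proof (cases "c = 0")
    case True
    then show ?thesis using extend_const[OF F] by simp
  next
    case False
    then show ?thesis using extend_pos_affine[OF F \<open>\<phi> \<in> B0 \<Sigma>\<close>] \<open>0 \<le> c\<close> by simp
  qed
qed

lemma monotonic_extend:
  assumes F: "pos_affine_equivariant F"
    and mono: "\<And>f g. f \<in> acts \<Sigma> X \<Longrightarrow> g \<in> acts \<Sigma> X \<Longrightarrow> (\<And>s. u (g s) \<le> u (f s)) \<Longrightarrow> F g \<le> F f"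
  shows "monotonic \<Sigma> (extend F)"
  unfolding monotonic_def
proof (intro ballI impI)
  fix \<phi> \<psi> assume \<phi>: "\<phi> \<in> B0 \<Sigma>" and \<psi>: "\<psi> \<in> B0 \<Sigma>" and le: "\<forall>s. \<psi> s \<le> \<phi> s"
  obtain a b f g where "0 < a" and f: "f \<in> acts \<Sigma> X" and g: "g \<in> acts \<Sigma> X"
    and uf: "u \<circ> f = (\<lambda>s. a * \<phi> s + b)" and ug: "u \<circ> g = (\<lambda>s. a * \<psi> s + b)"
    by (rule exists_acts_pos_affine[OF \<phi> \<psi>])
  have "u (g s) \<le> u (f s)" for s
    using fun_cong[OF uf, of s] fun_cong[OF ug, of s] le \<open>0 < a\<close> by simp
  then have "(F g - b) / a \<le> (F f - b) / a"
    using mono[OF f g] \<open>0 < a\<close> by (simp add: divide_right_mono)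
  then show "extend F \<psi> \<le> extend F \<phi>"
    using extend_eq[OF F \<open>0 < a\<close> f uf] extend_eq[OF F \<open>0 < a\<close> g ug] by simp
qed

end

section \<open>The pessimistic and optimistic values of an act\<close>

locale preference_with_utility = affine_utility \<Sigma> X u
  for \<Sigma> :: "'s set set" and X :: "'x::real_vector set" and u :: "'x \<Rightarrow> real" +
  fixes P :: "('s \<Rightarrow> 'x) \<Rightarrow> ('s \<Rightarrow> 'x) \<Rightarrow> bool"
  assumes A1: "A1 \<Sigma> X P" and A2: "A2 \<Sigma> X P" and A3: "A3 \<Sigma> X P" and A5: "A5 \<Sigma> X P"
    and cst_preferred_iff: "x \<in> X \<Longrightarrow> y \<in> X \<Longrightarrow> P (cst x) (cst y) \<longleftrightarrow> u y < u x"
begin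

lemma asym: "f \<in> acts \<Sigma> X \<Longrightarrow> g \<in> acts \<Sigma> X \<Longrightarrow> P f g \<Longrightarrow> \<not> P g f"
  using conjunct1[OF A1[unfolded A1_def]] by blast

lemma trans: "f \<in> acts \<Sigma> X \<Longrightarrow> g \<in> acts \<Sigma> X \<Longrightarrow> h \<in> acts \<Sigma> X \<Longrightarrow> P f g \<Longrightarrow> P g h \<Longrightarrow> P f h"
  using conjunct1[OF conjunct2[OF A1[unfolded A1_def]]] by blast

lemma strict_dominance:
  assumes "f \<in> acts \<Sigma> X" and "g \<in> acts \<Sigma> X" and "\<And>s. u (g s) < u (f s)"
  shows "P f g"
proof -
  have "P (cst (f s)) (cst (g s))" for s
    using cst_preferred_iff[OF acts_in_X[OF assms(1)] acts_in_X[OF assms(2)]] assms(3) by simp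
  then show ?thesis using A5 assms(1,2) unfolding A5_def by blast
qed

lemma independence:
  "f \<in> acts \<Sigma> X \<Longrightarrow> g \<in> acts \<Sigma> X \<Longrightarrow> x \<in> X \<Longrightarrow> 0 < t \<Longrightarrow> t < 1 \<Longrightarrow>
    P f g \<longleftrightarrow> P (mix t f (cst x)) (mix t g (cst x))"
  using A3 unfolding A3_def by auto

lemma openin_preferred_mix:
  "f \<in> acts \<Sigma> X \<Longrightarrow> g \<in> acts \<Sigma> X \<Longrightarrow> h \<in> acts \<Sigma> X \<Longrightarrow>
    openin (top_of_set {0..1}) {t\<in>{0..1::real}. P (mix t f g) h}"
  using A2 unfolding A2_def by blast

lemma openin_mix_preferred:
  "f \<in> acts \<Sigma> X \<Longrightarrow> g \<in> acts \<Sigma> X \<Longrightarrow> h \<in> acts \<Sigma> X \<Longrightarrow>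
    openin (top_of_set {0..1}) {t\<in>{0..1::real}. P h (mix t f g)}"
  using A2 unfolding A2_def by blast

lemma utility_mix_cst:
  "f \<in> acts \<Sigma> X \<Longrightarrow> y \<in> X \<Longrightarrow> 0 \<le> t \<Longrightarrow> t \<le> 1 \<Longrightarrow>
    u (mix t f (cst y) s) = t * u (f s) + (1 - t) * u y"
  using utility_mix[OF _ cst_in] by (simp add: cst_def)

lemma preferred_to_better_cst:
  assumes f: "f \<in> acts \<Sigma> X" and X: "x \<in> X" "z \<in> X" and "P f (cst x)" and "u x < u z"
  shows "\<exists>w\<in>X. u x < u w \<and> P f (cst w)"
proof -
  let ?S = "{t\<in>{0..1::real}. P f (cst (t *\<^sub>R x + (1 - t) *\<^sub>R z))}"
  have "openin (top_of_set {0..1}) ?S"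
    using openin_mix_preferred[OF cst_in[OF X(1)] cst_in[OF X(2)] f] by (simp add: mix_cst_cst)
  moreover have "1 \<in> ?S" using \<open>P f (cst x)\<close> by simp
  ultimately obtain t where t: "0 < t" "t < 1" "P f (cst (t *\<^sub>R x + (1 - t) *\<^sub>R z))"
    using openin_unit_interval_meets_interior by blast
  moreover have "u x < u (t *\<^sub>R x + (1 - t) *\<^sub>R z)"
  proof -
    have "u (t *\<^sub>R x + (1 - t) *\<^sub>R z) = u x + (1 - t) * (u z - u x)"
      using affine_onD[OF affine X, of t] t by (simp add: algebra_simps)
    moreover have "0 < (1 - t) * (u z - u x)" using t \<open>u x < u z\<close> by simp
    ultimately show ?thesis by linarith
  qed
  ultimately show ?thesis using point_mix_in X by auto
qed

lemma not_preferred_to_cst_above_best: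
  assumes f: "f \<in> acts \<Sigma> X" and X: "x \<in> X" "z \<in> X" and "P f (cst x)"
    and "best f \<le> u x" and "u x < u z"
  shows False
proof -
  obtain w where w: "w \<in> X" "u x < u w" "P f (cst w)"
    using preferred_to_better_cst[OF f X] assms(4,6) by blast
  have "u (f s) < u (cst w s)" for s
    using best_ge[OF f, of s] \<open>best f \<le> u x\<close> w(2) by (simp add: cst_def)
  then have "P (cst w) f" using strict_dominance[OF cst_in[OF w(1)] f] by blast
  then show False using asym[OF f cst_in[OF w(1)]] w(3) by blast
qed

lemma preferred_to_cst_below_best:
  assumes f: "f \<in> acts \<Sigma> X" and x: "x \<in> X" and fx: "P f (cst x)"
  shows "u x < best f"
proof (rule ccontr)
  assume "\<not> u x < best f"
  then have top: "best f \<le> u x" by simp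
  show False
  proof (cases "\<exists>z\<in>X. u x < u z")
    case True
    then show False using not_preferred_to_cst_above_best[OF f x _ fx top] by blast
  next
    case False
    \<comment> \<open>x is a best constant: mix halfway with a worse constant y to make room above.\<close>
    obtain p q where pq: "p \<in> X" "q \<in> X" "u p \<noteq> u q" using nonconstant by blast
    then have "u p \<le> u x" "u q \<le> u x" using False by (auto simp: not_less)
    then obtain y where y: "y \<in> X" "u y < u x"
      using pq by (cases "u p < u x") (auto simp: order.order_iff_strict)
    let ?f = "mix (1/2) f (cst y)" and ?x = "(1/2) *\<^sub>R x + (1/2) *\<^sub>R y"
    have f': "?f \<in> acts \<Sigma> X" using mix_in[OF f cst_in[OF y(1)]] by simp
    have x': "?x \<in> X" using point_mix_in[OF x y(1), of "1/2"] by simp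
    have "P ?f (mix (1/2) (cst x) (cst y))"
      using independence[OF f cst_in[OF x] y(1), of "1/2"] fx by simp
    then have "P ?f (cst ?x)" by (simp add: mix_cst_cst)
    moreover have "best ?f \<le> u ?x"
    proof -
      obtain s where "u (?f s) = best ?f" using best_attained[OF f'] by blast
      then show ?thesis using best_ge[OF f, of s] top utility_mix_cst[OF f y(1), of "1/2" s]
          affine_onD[OF affine x y(1), of "1/2"] by simp
    qed
    moreover have "u ?x < u x" using affine_onD[OF affine x y(1), of "1/2"] y(2) by simp
    ultimately show False
      using not_preferred_to_cst_above_best[OF f' x' x] by blast
  qed
qed

(* The element worst f only guards against an empty set of worse constants. *)
definition lower :: "('s \<Rightarrow> 'x) \<Rightarrow> real" where
  "lower f = Sup (insert (worst f) {u x | x. x \<in> X \<and> P f (cst x)})"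

lemma bdd_above_lower_set:
  "f \<in> acts \<Sigma> X \<Longrightarrow> bdd_above (insert (worst f) {u x | x. x \<in> X \<and> P f (cst x)})"
  using preferred_to_cst_below_best worst_le_best
  by (intro bdd_aboveI[of _ "best f"]) (auto intro: less_imp_le)

lemma worst_le_lower: "f \<in> acts \<Sigma> X \<Longrightarrow> worst f \<le> lower f"
  unfolding lower_def by (intro cSup_upper bdd_above_lower_set) auto

lemma lower_le_best: "f \<in> acts \<Sigma> X \<Longrightarrow> lower f \<le> best f"
  unfolding lower_def using preferred_to_cst_below_best worst_le_best
  by (intro cSup_least) (auto intro: less_imp_le)

lemma lower_attained: "f \<in> acts \<Sigma> X \<Longrightarrow> \<exists>x\<in>X. u x = lower f"
  using utility_attained worst_le_lower lower_le_best by blast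

lemma preferred_to_cst_iff:
  assumes f: "f \<in> acts \<Sigma> X" and x: "x \<in> X"
  shows "P f (cst x) \<longleftrightarrow> u x < lower f"
proof
  assume fx: "P f (cst x)"
  obtain s where "u (f s) = best f" using best_attained[OF f] by blast
  then have "u x < u (f s)" using preferred_to_cst_below_best[OF f x fx] by simp
  then obtain w where w: "w \<in> X" "u x < u w" "P f (cst w)"
    using preferred_to_better_cst[OF f x acts_in_X[OF f] fx] by blast
  have "u w \<le> lower f" unfolding lower_def
    using bdd_above_lower_set[OF f] w by (intro cSup_upper) auto
  then show "u x < lower f" using w(2) by simp
next
  assume "u x < lower f"
  then obtain r where r: "r \<in> insert (worst f) {u x | x. x \<in> X \<and> P f (cst x)}" "u x < r"
    unfolding lower_def using less_cSup_iff[OF _ bdd_above_lower_set[OF f]] by blast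
  then consider "r = worst f" | y where "y \<in> X" "P f (cst y)" "r = u y" by blast
  then show "P f (cst x)"
  proof cases
    case 1
    then have "u (cst x s) < u (f s)" for s using worst_le[OF f, of s] r(2) by (simp add: cst_def)
    then show ?thesis using strict_dominance[OF f cst_in[OF x]] by blast
  next
    case 2
    then have "P (cst y) (cst x)" using cst_preferred_iff[OF 2(1) x] r(2) by simp
    then show ?thesis using trans[OF f cst_in[OF 2(1)] cst_in[OF x]] 2(2) by blast
  qed
qed

lemma weak_dominance_cst_aux:
  assumes f: "f \<in> acts \<Sigma> X" and g: "g \<in> acts \<Sigma> X" and le: "\<And>s. u (g s) \<le> u (f s)"
    and x: "x \<in> X" and gx: "P g (cst x)" and z: "z \<in> X" "\<And>s. u z < u (g s)"
  shows "P f (cst x)"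
proof -
  \<comment> \<open>By A2, x stays below a mixture of g with z, and that mixture is strictly dominated by f.\<close>
  let ?S = "{t\<in>{0..1::real}. P (mix t g (cst z)) (cst x)}"
  have "openin (top_of_set {0..1}) ?S" using openin_preferred_mix[OF g cst_in cst_in] z x by blast
  moreover have "1 \<in> ?S" using gx by (simp add: mix_one)
  ultimately obtain t where t: "0 < t" "t < 1" and gtx: "P (mix t g (cst z)) (cst x)"
    using openin_unit_interval_meets_interior by blast
  have gt: "mix t g (cst z) \<in> acts \<Sigma> X" using mix_in[OF g cst_in[OF z(1)]] t by simp
  have "u (mix t g (cst z) s) < u (f s)" for s
  proof -
    have "(1 - t) * u z < (1 - t) * u (g s)" using z(2)[of s] t by simp
    then show ?thesis
      using utility_mix_cst[OF g z(1), of t s] t le[of s] by (simp add: algebra_simps)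
  qed
  then have "P f (mix t g (cst z))" using strict_dominance[OF f gt] by blast
  then show ?thesis using trans[OF f gt cst_in[OF x]] gtx by blast
qed

lemma weak_dominance_cst:
  assumes f: "f \<in> acts \<Sigma> X" and g: "g \<in> acts \<Sigma> X" and le: "\<And>s. u (g s) \<le> u (f s)"
    and x: "x \<in> X" and gx: "P g (cst x)"
  shows "P f (cst x)"
proof -
  obtain s0 where s0: "u (g s0) = worst g" using worst_attained[OF g] by blast
  obtain c where c: "c \<in> X" "u c \<noteq> worst g" using nonconstant by metis
  show ?thesis
  proof (cases "u c < worst g")
    case True
    then show ?thesis
      using weak_dominance_cst_aux[OF f g le x gx c(1)] worst_le[OF g] by (meson less_le_trans)
  next
    case False
    \<comment> \<open>No constant is worse than g: mix everything halfway with the better constant c.\<close>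
    then have c_above: "worst g < u c" using c(2) by simp
    let ?f = "mix (1/2) f (cst c)" and ?g = "mix (1/2) g (cst c)" and ?x = "(1/2) *\<^sub>R x + (1/2) *\<^sub>R c"
    have f': "?f \<in> acts \<Sigma> X" and g': "?g \<in> acts \<Sigma> X" using mix_in f g cst_in[OF c(1)] by simp_all
    have x': "?x \<in> X" using point_mix_in[OF x c(1), of "1/2"] by simp
    have "P ?g (mix (1/2) (cst x) (cst c))" using independence[OF g cst_in[OF x] c(1)] gx by simp
    then have "P ?g (cst ?x)" by (simp add: mix_cst_cst)
    moreover have "u (?g s) \<le> u (?f s)" for s
      using utility_mix_cst[OF f c(1), of "1/2" s] utility_mix_cst[OF g c(1), of "1/2" s] le[of s] by simp
    moreover have "u (g s0) < u (?g s)" for s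
      using utility_mix_cst[OF g c(1), of "1/2" s] worst_le[OF g, of s] s0 c_above by simp
    ultimately have "P ?f (cst ?x)"
      using weak_dominance_cst_aux[OF f' g' _ x' _ acts_in_X[OF g]] by blast
    then have "P ?f (mix (1/2) (cst x) (cst c))" by (simp add: mix_cst_cst)
    then show ?thesis using independence[OF f cst_in[OF x] c(1), of "1/2"] by simp
  qed
qed

lemma lower_mono:
  assumes f: "f \<in> acts \<Sigma> X" and g: "g \<in> acts \<Sigma> X" and le: "\<And>s. u (g s) \<le> u (f s)"
  shows "lower g \<le> lower f"
  unfolding lower_def[of g]
proof (rule cSup_least)
  fix r assume "r \<in> insert (worst g) {u x | x. x \<in> X \<and> P g (cst x)}"
  then consider "r = worst g" | x where "x \<in> X" "P g (cst x)" "r = u x" by blast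
  then show "r \<le> lower f"
  proof cases
    case 1
    obtain s where "u (f s) = worst f" using worst_attained[OF f] by blast
    then have "worst g \<le> worst f" using worst_le[OF g, of s] le[of s] by simp
    then show ?thesis using 1 worst_le_lower[OF f] by simp
  next
    case 2
    then show ?thesis
      using weak_dominance_cst[OF f g le] preferred_to_cst_iff[OF f] by (auto intro: less_imp_le)
  qed
qed simp

lemma lower_mix_cst:
  assumes f: "f \<in> acts \<Sigma> X" and y: "y \<in> X" and a: "0 < a" "a \<le> 1"
  shows "lower (mix a f (cst y)) = a * lower f + (1 - a) * u y"
proof (cases "a = 1")
  case True
  then show ?thesis by (simp add: mix_one)
next
  case False
  then have "a < 1" using a by simp
  let ?h = "mix a f (cst y)"
  have h: "?h \<in> acts \<Sigma> X" using mix_in[OF f cst_in[OF y]] a by simp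
  show ?thesis
  proof (rule eq_of_same_threshold[OF \<open>0 < a\<close>])
    fix x assume x: "x \<in> X"
    have "P f (cst x) \<longleftrightarrow> P ?h (cst (a *\<^sub>R x + (1 - a) *\<^sub>R y))"
      using independence[OF f cst_in[OF x] y \<open>0 < a\<close> \<open>a < 1\<close>] by (simp add: mix_cst_cst)
    then show "a * u x + (1 - a) * u y < lower ?h \<longleftrightarrow> u x < lower f"
      using preferred_to_cst_iff[OF f x] preferred_to_cst_iff[OF h point_mix_in[OF x y]]
        affine_onD[OF affine x y] a by simp
  next
    show "lower f \<in> u ` X" using lower_attained[OF f] by (metis rev_image_eqI)
  next
    obtain s1 s2 where s1: "u (?h s1) = worst ?h" and s2: "u (?h s2) = best ?h"
      using worst_attained[OF h] best_attained[OF h] by blast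
    have uh: "u (?h s) = a * u (f s) + (1 - a) * u y" for s using utility_mix_cst[OF f y] a by simp
    have "a * worst f \<le> a * u (f s1)" "a * u (f s2) \<le> a * best f"
      using worst_le[OF f] best_ge[OF f] a by (simp_all add: mult_left_mono)
    then have "a * worst f + (1 - a) * u y \<le> lower ?h" "lower ?h \<le> a * best f + (1 - a) * u y"
      using uh[of s1] uh[of s2] s1 s2 worst_le_lower[OF h] lower_le_best[OF h] by linarith+
    then have "worst f \<le> (lower ?h - (1 - a) * u y) / a" "(lower ?h - (1 - a) * u y) / a \<le> best f"
      using a by (simp_all add: field_simps)
    then show "(lower ?h - (1 - a) * u y) / a \<in> u ` X"
      using utility_attained[OF f] by (metis rev_image_eqI)
  qed
qed

lemma lower_pos_affine:
  assumes f: "f \<in> acts \<Sigma> X" and g: "g \<in> acts \<Sigma> X" and "0 < a"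
    and ug: "u \<circ> g = (\<lambda>s. a * u (f s) + b)"
  shows "lower g = a * lower f + b"
proof -
  define t where "t = 1 / (1 + a)"
  have t: "0 < t" "t < 1" "1 - t = a * t" using \<open>0 < a\<close> by (auto simp: t_def field_simps)
  fix s0
  have ug': "u (g s) = a * u (f s) + b" for s using fun_cong[OF ug, of s] by simp
  \<comment> \<open>These mixtures of f and g with constants have the same utility profile.\<close>
  let ?F = "mix (1 - t) f (cst (g s0))" and ?G = "mix t g (cst (f s0))"
  have F: "?F \<in> acts \<Sigma> X" and G: "?G \<in> acts \<Sigma> X"
    using mix_in[OF f cst_in] mix_in[OF g cst_in] acts_in_X[OF f] acts_in_X[OF g] t by simp_all
  have "u (?G s) = u (?F s)" for s
  proof -
    have "u (?G s) = t * u (g s) + (1 - t) * u (f s0)"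
      using utility_mix_cst[OF g acts_in_X[OF f, of s0], of t s] t by simp
    also have "\<dots> = (1 - t) * u (f s) + t * u (g s0)"
      unfolding t(3) ug' by (simp add: algebra_simps)
    also have "\<dots> = u (?F s)"
      using utility_mix_cst[OF f acts_in_X[OF g, of s0], of "1 - t" s] t by simp
    finally show ?thesis .
  qed
  then have "lower ?G = lower ?F"
    using lower_mono[OF F G] lower_mono[OF G F] by (simp add: order_antisym)
  moreover have "lower ?F = (1 - t) * lower f + t * u (g s0)"
    using lower_mix_cst[OF f acts_in_X[OF g]] t by simp
  moreover have "lower ?G = t * lower g + (1 - t) * u (f s0)"
    using lower_mix_cst[OF g acts_in_X[OF f]] t by simp
  ultimately have "t * lower g = t * (a * lower f + b)"
    using ug'[of s0] t(3) by (simp add: algebra_simps)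
  then show ?thesis using t(1) by simp
qed

lemma pos_affine_equivariant_lower: "pos_affine_equivariant lower"
  unfolding pos_affine_equivariant_def using lower_pos_affine by blast

end

lemma A1_converse: "A1 \<Sigma> X P \<Longrightarrow> A1 \<Sigma> X (\<lambda>f g. P g f)"
  unfolding A1_def by blast

lemma A2_converse: "A2 \<Sigma> X P \<Longrightarrow> A2 \<Sigma> X (\<lambda>f g. P g f)"
  unfolding A2_def by blast

lemma A3_converse: "A3 \<Sigma> X P \<Longrightarrow> A3 \<Sigma> X (\<lambda>f g. P g f)"
  unfolding A3_def by blast

lemma A5_converse: "A5 \<Sigma> X P \<Longrightarrow> A5 \<Sigma> X (\<lambda>f g. P g f)"
  unfolding A5_def by blast

locale axiomatic_preference = preference_with_utility +
  assumes A6: "A6 \<Sigma> X P" and A7: "A7 \<Sigma> X P"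
begin

sublocale dual: preference_with_utility \<Sigma> X "\<lambda>x. - u x" "\<lambda>f g. P g f"
proof -
  have "affine_utility \<Sigma> X (\<lambda>x. - u x)"
    using algebra convex affine_on_uminus[OF affine] nonconstant by (simp add: affine_utility_def)
  moreover have "x \<in> X \<Longrightarrow> y \<in> X \<Longrightarrow> P (cst y) (cst x) \<longleftrightarrow> - u y < - u x" for x y
    using cst_preferred_iff by simp
  ultimately show "preference_with_utility \<Sigma> X (\<lambda>x. - u x) (\<lambda>f g. P g f)"
    using A1_converse[OF A1] A2_converse[OF A2] A3_converse[OF A3] A5_converse[OF A5]
    by (simp add: preference_with_utility_def preference_with_utility_axioms_def)
qed

definition upper where
  "upper f = - dual.lower f"

lemma cst_preferred_to_iff: "f \<in> acts \<Sigma> X \<Longrightarrow> x \<in> X \<Longrightarrow> P (cst x) f \<longleftrightarrow> upper f < u x"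
  using dual.preferred_to_cst_iff by (auto simp: upper_def)

lemma upper_attained: "f \<in> acts \<Sigma> X \<Longrightarrow> \<exists>x\<in>X. u x = upper f"
  using dual.lower_attained by (force simp: upper_def)

lemma upper_mono:
  "f \<in> acts \<Sigma> X \<Longrightarrow> g \<in> acts \<Sigma> X \<Longrightarrow> (\<And>s. u (g s) \<le> u (f s)) \<Longrightarrow> upper g \<le> upper f"
  using dual.lower_mono[of g f] by (simp add: upper_def)

lemma pos_affine_equivariant_upper: "pos_affine_equivariant upper"
  unfolding pos_affine_equivariant_def
proof (intro ballI allI impI)
  fix f g and a b :: real
  assume f: "f \<in> acts \<Sigma> X" and g: "g \<in> acts \<Sigma> X" and "0 < a"
    and "u \<circ> g = (\<lambda>s. a * u (f s) + b)"
  then have "(\<lambda>x. - u x) \<circ> g = (\<lambda>s. a * - u (f s) + - b)" by (simp add: fun_eq_iff)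
  from dual.lower_pos_affine[OF f g \<open>0 < a\<close> this] show "upper g = a * upper f + b"
    by (simp add: upper_def)
qed

lemma lower_le_upper:
  assumes f: "f \<in> acts \<Sigma> X" shows "lower f \<le> upper f"
proof (rule ccontr)
  assume "\<not> lower f \<le> upper f"
  moreover obtain x y where "x \<in> X" "u x = upper f" "y \<in> X" "u y = lower f"
    using upper_attained[OF f] lower_attained[OF f] by metis
  ultimately have "\<exists>z\<in>X. u z = (lower f + upper f) / 2"
    by (intro utility_between[of x y]) auto
  then obtain z where "z \<in> X" "u z = (lower f + upper f) / 2" ..
  then have "P f (cst z)" "P (cst z) f"
    using preferred_to_cst_iff[OF f] cst_preferred_to_iff[OF f] \<open>\<not> lower f \<le> upper f\<close> by auto
  then show False using asym[OF f cst_in[OF \<open>z \<in> X\<close>]] by blast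
qed

lemma incomp_cst_iff:
  "f \<in> acts \<Sigma> X \<Longrightarrow> x \<in> X \<Longrightarrow> incomp P f (cst x) \<longleftrightarrow> lower f \<le> u x \<and> u x \<le> upper f"
  unfolding incomp_def using preferred_to_cst_iff cst_preferred_to_iff by (auto simp: not_less)

lemma preferred_if_lower_upper_less:
  assumes f: "f \<in> acts \<Sigma> X" and g: "g \<in> acts \<Sigma> X"
    and "lower g < lower f" and "upper g < upper f"
  shows "P f g"
proof -
  obtain x where x: "x \<in> X" "u x = upper f" using upper_attained[OF f] by blast
  obtain y where y: "y \<in> X" "u y = lower g" using lower_attained[OF g] by blast
  have "incomp P f (cst x)" using incomp_cst_iff[OF f x(1)] x(2) lower_le_upper[OF f] by simp
  moreover have "P (cst x) g" using cst_preferred_to_iff[OF g x(1)] x(2) assms(4) by simp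
  moreover have "incomp P g (cst y)"
    using incomp_cst_iff[OF g y(1)] y(2) lower_le_upper[OF g] by simp
  moreover have "P f (cst y)" using preferred_to_cst_iff[OF f y(1)] y(2) assms(3) by simp
  ultimately show ?thesis using A7 f g x(1) y(1) unfolding A7_def by blast
qed

lemma preferred_iff_lower_upper_less:
  assumes f: "f \<in> acts \<Sigma> X" and g: "g \<in> acts \<Sigma> X"
  shows "P f g \<longleftrightarrow> lower g < lower f \<and> upper g < upper f"
proof
  assume fg: "P f g"
  then have "\<not> incomp P f g" "\<not> incomp P g f" by (auto simp: incomp_def)
  then obtain x y where "x \<in> X" "incomp P f (cst x)" "\<not> incomp P g (cst x)"
    and "y \<in> X" "incomp P g (cst y)" "\<not> incomp P f (cst y)"
    using A6 f g unfolding A6_def by blast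
  then have "lower f < lower g \<or> upper g < upper f" and "lower g < lower f \<or> upper f < upper g"
    using incomp_cst_iff f g by auto
  moreover have "\<not> (lower f < lower g \<and> upper f < upper g)"
    using preferred_if_lower_upper_less[OF g f] asym[OF f g] fg by blast
  ultimately show "lower g < lower f \<and> upper g < upper f" by linarith
qed (use preferred_if_lower_upper_less[OF f g] in blast)

theorem represents_extend: "represents \<Sigma> X P u (extend lower) (extend upper)"
proof -
  note lower = pos_affine_equivariant_lower and upper = pos_affine_equivariant_upper
  have "extend lower (u \<circ> h) \<le> extend upper (u \<circ> h)" if "h \<in> acts \<Sigma> X" for h
    using lower_le_upper[OF that] extend_comp[OF lower that] extend_comp[OF upper that] by simp
  moreover have "P f g \<longleftrightarrow> extend lower (u \<circ> g) < extend lower (u \<circ> f)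
      \<and> extend upper (u \<circ> g) < extend upper (u \<circ> f)"
    if "f \<in> acts \<Sigma> X" "g \<in> acts \<Sigma> X" for f g
    using preferred_iff_lower_upper_less[OF that] extend_comp[OF lower] extend_comp[OF upper] that
    by simp
  ultimately show ?thesis
    unfolding represents_def
    using affine nonconstant constant_linear_extend[OF lower] constant_linear_extend[OF upper]
      monotonic_extend[OF lower lower_mono] monotonic_extend[OF upper upper_mono]
    by blast
qed

end

section \<open>Necessity and uniqueness of the representation\<close>

locale represented = affine_utility \<Sigma> X u
  for \<Sigma> :: "'s set set" and X :: "'x::real_vector set" and u :: "'x \<Rightarrow> real" +
  fixes P :: "('s \<Rightarrow> 'x) \<Rightarrow> ('s \<Rightarrow> 'x) \<Rightarrow> bool" and Ip Io :: "('s \<Rightarrow> real) \<Rightarrow> real"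
  assumes represents: "represents \<Sigma> X P u Ip Io"
begin

lemma Ip: "constant_linear \<Sigma> Ip" "monotonic \<Sigma> Ip"
  and Io: "constant_linear \<Sigma> Io" "monotonic \<Sigma> Io"
  using represents by (simp_all add: represents_def)

lemma Ip_le_Io: "h \<in> acts \<Sigma> X \<Longrightarrow> Ip (u \<circ> h) \<le> Io (u \<circ> h)"
  using represents by (simp add: represents_def)

lemma preferred_iff:
  "f \<in> acts \<Sigma> X \<Longrightarrow> g \<in> acts \<Sigma> X \<Longrightarrow> P f g \<longleftrightarrow> Ip (u \<circ> g) < Ip (u \<circ> f) \<and> Io (u \<circ> g) < Io (u \<circ> f)"
  using represents by (simp add: represents_def)

lemma utility_cst: "u \<circ> cst x = (\<lambda>_. u x)"
  by (simp add: cst_def comp_def)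

lemma cst_preferred_iff: "x \<in> X \<Longrightarrow> y \<in> X \<Longrightarrow> P (cst x) (cst y) \<longleftrightarrow> u y < u x"
  using preferred_iff[OF cst_in cst_in] constant_linear_const[OF algebra Ip(1)]
    constant_linear_const[OF algebra Io(1)]
  by (simp add: utility_cst)

lemma preferred_to_cst_iff: "f \<in> acts \<Sigma> X \<Longrightarrow> x \<in> X \<Longrightarrow> P f (cst x) \<longleftrightarrow> u x < Ip (u \<circ> f)"
  using preferred_iff[OF _ cst_in] constant_linear_const[OF algebra Ip(1)]
    constant_linear_const[OF algebra Io(1)] Ip_le_Io
  by (fastforce simp: utility_cst)

lemma cst_preferred_to_iff: "f \<in> acts \<Sigma> X \<Longrightarrow> x \<in> X \<Longrightarrow> P (cst x) f \<longleftrightarrow> Io (u \<circ> f) < u x"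
  using preferred_iff[OF cst_in] constant_linear_const[OF algebra Ip(1)]
    constant_linear_const[OF algebra Io(1)] Ip_le_Io
  by (fastforce simp: utility_cst)

lemma value_attained:
  assumes "constant_linear \<Sigma> I" and "monotonic \<Sigma> I" and "f \<in> acts \<Sigma> X"
  shows "\<exists>x\<in>X. u x = I (u \<circ> f)"
  using utility_attained[OF assms(3)]
    monotonic_constant_linear_Min_Max[OF algebra assms(1,2) utility_comp_in_B0[OF assms(3)]]
  by (simp add: worst_def best_def)

lemma incomp_cst_iff:
  "f \<in> acts \<Sigma> X \<Longrightarrow> x \<in> X \<Longrightarrow> incomp P f (cst x) \<longleftrightarrow> Ip (u \<circ> f) \<le> u x \<and> u x \<le> Io (u \<circ> f)"
  unfolding incomp_def using preferred_to_cst_iff cst_preferred_to_iff by (auto simp: not_less)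

lemma A1: "A1 \<Sigma> X P"
  unfolding A1_def
proof (intro conjI ballI impI)
  fix f g assume "f \<in> acts \<Sigma> X" "g \<in> acts \<Sigma> X" "P f g"
  then show "\<not> P g f" using preferred_iff by auto
next
  fix f g h assume "f \<in> acts \<Sigma> X" "g \<in> acts \<Sigma> X" "h \<in> acts \<Sigma> X" "P f g \<and> P g h"
  then show "P f h" using preferred_iff[of f g] preferred_iff[of g h] preferred_iff[of f h] by auto
next
  obtain x y where "x \<in> X" "y \<in> X" "u x \<noteq> u y" using nonconstant by blast
  then show "\<exists>x\<in>X. \<exists>y\<in>X. P (cst x) (cst y)"
    using cst_preferred_iff by (metis linorder_neqE_linordered_idom)
next
  fix x y z assume "x \<in> X" "y \<in> X" "z \<in> X" "\<not> P (cst x) (cst y) \<and> \<not> P (cst y) (cst z)"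
  then show "\<not> P (cst x) (cst z)" using cst_preferred_iff by auto
qed

lemma lipschitz_on_mix:
  assumes I: "constant_linear \<Sigma> I" "monotonic \<Sigma> I" and f: "f \<in> acts \<Sigma> X" and g: "g \<in> acts \<Sigma> X"
  shows "\<exists>K. K-lipschitz_on {0..1} (\<lambda>t. I (u \<circ> mix t f g))"
proof -
  define K where "K = \<bar>best f - worst g\<bar> + \<bar>best g - worst f\<bar>"
  have bound: "\<bar>u (f s) - u (g s)\<bar> \<le> K" for s
    unfolding K_def abs_le_iff
    using best_ge[OF f, of s] worst_le[OF f, of s] best_ge[OF g, of s] worst_le[OF g, of s]
      abs_ge_self[of "best f - worst g"] abs_ge_self[of "best g - worst f"]
      abs_ge_zero[of "best f - worst g"] abs_ge_zero[of "best g - worst f"]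
    by (intro conjI) linarith+
  have le: "I (u \<circ> mix a f g) \<le> I (u \<circ> mix b f g) + K * \<bar>a - b\<bar>"
    if "a \<in> {0..1}" "b \<in> {0..1}" for a b
  proof (rule monotonic_constant_linear_le_shift[OF algebra I utility_comp_in_B0 utility_comp_in_B0])
    show "mix a f g \<in> acts \<Sigma> X" "mix b f g \<in> acts \<Sigma> X" using mix_in[OF f g] that by auto
    fix s
    have "(u \<circ> mix a f g) s - (u \<circ> mix b f g) s = (a - b) * (u (f s) - u (g s))"
      using utility_mix[OF f g] that by (simp add: algebra_simps)
    also have "\<dots> \<le> \<bar>a - b\<bar> * \<bar>u (f s) - u (g s)\<bar>" by (metis abs_ge_self abs_mult)
    also have "\<dots> \<le> K * \<bar>a - b\<bar>"
      using mult_left_mono[OF bound[of s] abs_ge_zero[of "a - b"]] by (simp add: mult.commute)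
    finally show "(u \<circ> mix a f g) s \<le> (u \<circ> mix b f g) s + K * \<bar>a - b\<bar>" by simp
  qed
  have "K-lipschitz_on {0..1} (\<lambda>t. I (u \<circ> mix t f g))"
  proof (rule lipschitz_onI)
    fix a b :: real assume "a \<in> {0..1}" "b \<in> {0..1}"
    then have "I (u \<circ> mix a f g) - I (u \<circ> mix b f g) \<le> K * \<bar>a - b\<bar>"
      and "I (u \<circ> mix b f g) - I (u \<circ> mix a f g) \<le> K * \<bar>a - b\<bar>"
      using le[of a b] le[of b a] by (simp_all add: abs_minus_commute)
    then show "dist (I (u \<circ> mix a f g)) (I (u \<circ> mix b f g)) \<le> K * dist a b"
      by (simp add: dist_real_def abs_le_iff)
  qed (simp add: K_def)
  then show ?thesis ..
qed

lemma continuous_on_mix: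
  "constant_linear \<Sigma> I \<Longrightarrow> monotonic \<Sigma> I \<Longrightarrow> f \<in> acts \<Sigma> X \<Longrightarrow> g \<in> acts \<Sigma> X \<Longrightarrow>
    continuous_on {0..1} (\<lambda>t. I (u \<circ> mix t f g))"
  using lipschitz_on_mix lipschitz_on_continuous_on by blast

lemma A2: "A2 \<Sigma> X P"
  unfolding A2_def
proof (intro ballI conjI)
  fix f g h assume f: "f \<in> acts \<Sigma> X" and g: "g \<in> acts \<Sigma> X" and h: "h \<in> acts \<Sigma> X"
  note cont = continuous_on_mix[OF Ip f g] continuous_on_mix[OF Io f g]
  have "{t\<in>{0..1}. P (mix t f g) h} = {t\<in>{0..1}. Ip (u \<circ> mix t f g) \<in> {Ip (u \<circ> h)<..}
      \<and> Io (u \<circ> mix t f g) \<in> {Io (u \<circ> h)<..}}"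
    using preferred_iff[OF mix_in[OF f g] h] by auto
  then show "openin (top_of_set {0..1}) {t\<in>{0..1}. P (mix t f g) h}"
    using openin_continuous_preimages[OF cont open_greaterThan open_greaterThan] by simp
  have "{t\<in>{0..1}. P h (mix t f g)} = {t\<in>{0..1}. Ip (u \<circ> mix t f g) \<in> {..<Ip (u \<circ> h)}
      \<and> Io (u \<circ> mix t f g) \<in> {..<Io (u \<circ> h)}}"
    using preferred_iff[OF h mix_in[OF f g]] by auto
  then show "openin (top_of_set {0..1}) {t\<in>{0..1}. P h (mix t f g)}"
    using openin_continuous_preimages[OF cont open_lessThan open_lessThan] by simp
qed

lemma mix_cst_value:
  assumes "constant_linear \<Sigma> I" and "f \<in> acts \<Sigma> X" and "x \<in> X" and "0 \<le> t" "t \<le> 1"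
  shows "I (u \<circ> mix t f (cst x)) = t * I (u \<circ> f) + (1 - t) * u x"
proof -
  have "u \<circ> mix t f (cst x) = (\<lambda>s. t * (u \<circ> f) s + (1 - t) * u x)"
    using utility_mix[OF assms(2) cst_in[OF assms(3)]] assms(4,5) by (simp add: fun_eq_iff cst_def)
  then show ?thesis
    using constant_linearD[OF assms(1) utility_comp_in_B0[OF assms(2)] assms(4)] by simp
qed

lemma A3: "A3 \<Sigma> X P"
  unfolding A3_def
proof (intro ballI)
  fix f g x and t :: real
  assume f: "f \<in> acts \<Sigma> X" and g: "g \<in> acts \<Sigma> X" and x: "x \<in> X" and "t \<in> {0<..<1}"
  then have t: "0 \<le> t" "t \<le> 1" "0 < t" by auto
  have "P (mix t f (cst x)) (mix t g (cst x))
      \<longleftrightarrow> t * Ip (u \<circ> g) < t * Ip (u \<circ> f) \<and> t * Io (u \<circ> g) < t * Io (u \<circ> f)"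
    using preferred_iff[OF mix_in[OF f cst_in[OF x] t(1,2)] mix_in[OF g cst_in[OF x] t(1,2)]]
    unfolding mix_cst_value[OF Ip(1) f x t(1,2)] mix_cst_value[OF Ip(1) g x t(1,2)]
      mix_cst_value[OF Io(1) f x t(1,2)] mix_cst_value[OF Io(1) g x t(1,2)]
    by simp
  also have "\<dots> \<longleftrightarrow> P f g" using preferred_iff[OF f g] t(3) by simp
  finally show "P f g \<longleftrightarrow> P (mix t f (cst x)) (mix t g (cst x))" ..
qed

lemma A5: "A5 \<Sigma> X P"
  unfolding A5_def
proof (intro ballI impI)
  fix f g assume f: "f \<in> acts \<Sigma> X" and g: "g \<in> acts \<Sigma> X"
    and dom: "\<forall>s. P (cst (f s)) (cst (g s))"
  have less: "u (g s) < u (f s)" for s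
    using dom cst_preferred_iff[OF acts_in_X[OF f] acts_in_X[OF g]] by blast
  have "finite (range (\<lambda>s. u (f s) - u (g s)))"
  proof (rule finite_subset)
    show "range (\<lambda>s. u (f s) - u (g s)) \<subseteq> (\<lambda>(y, z). y - z) ` (range (u \<circ> f) \<times> range (u \<circ> g))"
    proof (rule subsetI)
      fix r assume "r \<in> range (\<lambda>s. u (f s) - u (g s))"
      then obtain s where "r = u (f s) - u (g s)" by blast
      then show "r \<in> (\<lambda>(y, z). y - z) ` (range (u \<circ> f) \<times> range (u \<circ> g))"
        by (intro image_eqI[of _ _ "(u (f s), u (g s))"]) auto
    qed
    show "finite ((\<lambda>(y, z). y - z) ` (range (u \<circ> f) \<times> range (u \<circ> g)))"
      using finite_utility_range[OF f] finite_utility_range[OF g] by simp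
  qed
  moreover define \<epsilon> where "\<epsilon> = Min (range (\<lambda>s. u (f s) - u (g s)))"
  ultimately have "\<epsilon> \<in> range (\<lambda>s. u (f s) - u (g s))" and le: "\<And>s. \<epsilon> \<le> u (f s) - u (g s)"
    by auto
  then have "0 < \<epsilon>" using less by auto
  moreover have "(u \<circ> g) s \<le> (u \<circ> f) s + - \<epsilon>" for s using le[of s] by simp
  then have "Ip (u \<circ> g) \<le> Ip (u \<circ> f) + - \<epsilon>" "Io (u \<circ> g) \<le> Io (u \<circ> f) + - \<epsilon>"
    using monotonic_constant_linear_le_shift[OF algebra Ip utility_comp_in_B0[OF g] utility_comp_in_B0[OF f]]
      monotonic_constant_linear_le_shift[OF algebra Io utility_comp_in_B0[OF g] utility_comp_in_B0[OF f]]
    by blast+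
  ultimately show "P f g" using preferred_iff[OF f g] by simp
qed

lemma A6: "A6 \<Sigma> X P"
  unfolding A6_def
proof (intro ballI impI)
  fix f g assume f: "f \<in> acts \<Sigma> X" and g: "g \<in> acts \<Sigma> X"
    and incomp: "\<forall>x\<in>X. incomp P f (cst x) \<longrightarrow> incomp P g (cst x)"
  obtain x y where "x \<in> X" "u x = Ip (u \<circ> f)" "y \<in> X" "u y = Io (u \<circ> f)"
    using value_attained[OF Ip f] value_attained[OF Io f] by metis
  then have "incomp P g (cst x)" "incomp P g (cst y)"
    using incomp incomp_cst_iff[OF f] Ip_le_Io[OF f] by auto
  then have "Ip (u \<circ> g) \<le> Ip (u \<circ> f)" "Io (u \<circ> f) \<le> Io (u \<circ> g)"
    using incomp_cst_iff[OF g] \<open>x \<in> X\<close> \<open>u x = Ip (u \<circ> f)\<close> \<open>y \<in> X\<close> \<open>u y = Io (u \<circ> f)\<close> by auto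
  then show "incomp P f g" unfolding incomp_def
    using preferred_iff[OF f g] preferred_iff[OF g f] by auto
qed

lemma A7: "A7 \<Sigma> X P"
  unfolding A7_def
proof (intro ballI impI)
  fix f g x y assume f: "f \<in> acts \<Sigma> X" and g: "g \<in> acts \<Sigma> X" and x: "x \<in> X" and y: "y \<in> X"
    and "incomp P f (cst x) \<and> P (cst x) g \<and> incomp P g (cst y) \<and> P f (cst y)"
  then show "P f g"
    using incomp_cst_iff[OF f x] incomp_cst_iff[OF g y] cst_preferred_to_iff[OF g x]
      preferred_to_cst_iff[OF f y] preferred_iff[OF f g]
    by auto
qed

end

lemma represented_if_represents:
  "algebra UNIV \<Sigma> \<Longrightarrow> convex X \<Longrightarrow> represents \<Sigma> X P u Ip Io \<Longrightarrow> represented \<Sigma> X u P Ip Io"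
  by (simp add: represented_def represented_axioms_def affine_utility_def represents_def)

lemma represents_imp_axioms:
  assumes "algebra UNIV \<Sigma>" and "convex X" and "represents \<Sigma> X P u Ip Io"
  shows "A1 \<Sigma> X P \<and> A2 \<Sigma> X P \<and> A3 \<Sigma> X P \<and> A5 \<Sigma> X P \<and> A6 \<Sigma> X P \<and> A7 \<Sigma> X P"
proof -
  interpret represented \<Sigma> X u P Ip Io using represented_if_represents[OF assms] .
  show ?thesis using A1 A2 A3 A5 A6 A7 by blast
qed

lemma represents_utility_unique:
  assumes "algebra UNIV \<Sigma>" and "convex X"
    and "represents \<Sigma> X P u Ip Io" and "represents \<Sigma> X P u' Ip' Io'"
  shows "\<exists>a b. a > 0 \<and> (\<forall>x\<in>X. u' x = a * u x + b)"
proof -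
  interpret r: represented \<Sigma> X u P Ip Io using represented_if_represents[OF assms(1-3)] .
  interpret r': represented \<Sigma> X u' P Ip' Io' using represented_if_represents[OF assms(1,2,4)] .
  have "\<forall>x\<in>X. \<forall>y\<in>X. u y < u x \<longleftrightarrow> u' y < u' x"
    using r.cst_preferred_iff r'.cst_preferred_iff by blast
  then show ?thesis
    using affine_on_same_order_pos_affine[OF assms(2) r.affine r'.affine _ r.nonconstant] by blast
qed

lemma represents_functionals_unique:
  assumes "algebra UNIV \<Sigma>" and "convex X"
    and "represents \<Sigma> X P u Ip Io" and "represents \<Sigma> X P u Ip' Io'" and \<phi>: "\<phi> \<in> B0 \<Sigma>"
  shows "Ip' \<phi> = Ip \<phi> \<and> Io' \<phi> = Io \<phi>"
proof -
  interpret r: represented \<Sigma> X u P Ip Io using represented_if_represents[OF assms(1-3)] .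
  interpret r': represented \<Sigma> X u P Ip' Io' using represented_if_represents[OF assms(1,2,4)] .
  obtain a b f where "0 < a" and f: "f \<in> acts \<Sigma> X" and uf: "u \<circ> f = (\<lambda>s. a * \<phi> s + b)"
    using r.exists_acts_pos_affine[OF \<phi> \<phi>] by metis
  have "Ip' (u \<circ> f) = 1 * Ip (u \<circ> f) + 0"
  proof (rule eq_of_same_threshold)
    show "1 * u x + 0 < Ip' (u \<circ> f) \<longleftrightarrow> u x < Ip (u \<circ> f)" if "x \<in> X" for x
      using r.preferred_to_cst_iff[OF f that] r'.preferred_to_cst_iff[OF f that] by simp
    show "Ip (u \<circ> f) \<in> u ` X" "(Ip' (u \<circ> f) - 0) / 1 \<in> u ` X"
      using r.value_attained[OF r.Ip f] r.value_attained[OF r'.Ip f] by (auto intro: rev_image_eqI)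
  qed simp
  moreover have "- Io' (u \<circ> f) = 1 * - Io (u \<circ> f) + 0"
  proof (rule eq_of_same_threshold[where u = "\<lambda>x. - u x"])
    show "1 * - u x + 0 < - Io' (u \<circ> f) \<longleftrightarrow> - u x < - Io (u \<circ> f)" if "x \<in> X" for x
      using r.cst_preferred_to_iff[OF f that] r'.cst_preferred_to_iff[OF f that] by simp
    show "- Io (u \<circ> f) \<in> (\<lambda>x. - u x) ` X" "(- Io' (u \<circ> f) - 0) / 1 \<in> (\<lambda>x. - u x) ` X"
      using r.value_attained[OF r.Io f] r.value_attained[OF r'.Io f] by (auto intro: rev_image_eqI)
  qed simp
  moreover have lin: "I (u \<circ> f) = a * I \<phi> + b" if "constant_linear \<Sigma> I" for I
    using constant_linearD[OF that \<phi>, of a b] \<open>0 < a\<close> uf by simp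
  ultimately show ?thesis
    using lin[OF r.Ip(1)] lin[OF r'.Ip(1)] lin[OF r.Io(1)] lin[OF r'.Io(1)] \<open>0 < a\<close> by simp
qed

lemma mixture_order_on_constants:
  assumes "algebra UNIV \<Sigma>" and "convex X" and A1: "A1 \<Sigma> X P" and A2: "A2 \<Sigma> X P" and A3: "A3 \<Sigma> X P"
  shows "mixture_order X (\<lambda>x y. P (cst x) (cst y))"
proof
  note cst = cst_in_acts[OF assms(1)]
  show "convex X" by fact
  fix x y z assume X: "x \<in> X" "y \<in> X" "z \<in> X"
  show "P (cst x) (cst y) \<Longrightarrow> \<not> P (cst y) (cst x)"
    using conjunct1[OF A1[unfolded A1_def], rule_format, OF cst[OF X(1)] cst[OF X(2)]] .
  show "P (cst x) (cst z) \<Longrightarrow> P (cst x) (cst y) \<or> P (cst y) (cst z)"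
    using conjunct2[OF conjunct2[OF conjunct2[OF A1[unfolded A1_def]]], rule_format, OF X] by blast
  show "openin (top_of_set {0..1}) {t\<in>{0..1}. P (cst (t *\<^sub>R x + (1 - t) *\<^sub>R y)) (cst z)}"
    and "openin (top_of_set {0..1}) {t\<in>{0..1}. P (cst z) (cst (t *\<^sub>R x + (1 - t) *\<^sub>R y))}"
    using A2[unfolded A2_def, rule_format, OF cst[OF X(1)] cst[OF X(2)] cst[OF X(3)]]
    by (simp_all add: mix_cst_cst)
  show "0 < t \<Longrightarrow> t < 1 \<Longrightarrow>
      P (cst y) (cst z) \<longleftrightarrow> P (cst (t *\<^sub>R y + (1 - t) *\<^sub>R x)) (cst (t *\<^sub>R z + (1 - t) *\<^sub>R x))" for t
    using A3[unfolded A3_def, rule_format, OF cst[OF X(2)] cst[OF X(3)] X(1), of t]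
    by (simp add: mix_cst_cst)
qed

lemma axioms_imp_represents:
  assumes "algebra UNIV \<Sigma>" and "convex X"
    and "A1 \<Sigma> X P" "A2 \<Sigma> X P" "A3 \<Sigma> X P" "A5 \<Sigma> X P" "A6 \<Sigma> X P" "A7 \<Sigma> X P"
  shows "\<exists>u Ip Io. represents \<Sigma> X P u Ip Io"
proof -
  obtain x y where xy: "x \<in> X" "y \<in> X" "P (cst x) (cst y)"
    using conjunct1[OF conjunct2[OF conjunct2[OF assms(3)[unfolded A1_def]]]] by blast
  obtain u where u: "affine_on X u" "\<forall>x\<in>X. \<forall>y\<in>X. P (cst x) (cst y) \<longleftrightarrow> u y < u x"
    using mixture_order.exists_affine_utility[OF mixture_order_on_constants[OF assms(1-5)]] xy by blast
  have "affine_utility \<Sigma> X u"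
    using assms(1,2) u xy by (simp add: affine_utility_def) (metis less_irrefl)
  then have "preference_with_utility \<Sigma> X u P"
    using assms(3-6) u(2) by (simp add: preference_with_utility_def preference_with_utility_axioms_def)
  then interpret axiomatic_preference \<Sigma> X u P
    using assms(7,8) by (simp add: axiomatic_preference_def axiomatic_preference_axioms_def)
  show ?thesis using represents_extend by blast
qed

theorem theorem4:
  fixes \<Sigma> :: "'s set set" and X :: "'x::real_vector set"
    and P :: "('s \<Rightarrow> 'x) \<Rightarrow> ('s \<Rightarrow> 'x) \<Rightarrow> bool"
  assumes "algebra UNIV \<Sigma>"
    and "convex X" and "\<exists>x\<in>X. \<exists>y\<in>X. x \<noteq> y"
  shows "(A1 \<Sigma> X P \<and> A2 \<Sigma> X P \<and> A3 \<Sigma> X P \<and> A5 \<Sigma> X P \<and> A6 \<Sigma> X P \<and> A7 \<Sigma> X P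
            \<longleftrightarrow> (\<exists>u Ip Io. represents \<Sigma> X P u Ip Io))
       \<and> (\<forall>u Ip Io u' Ip' Io'. represents \<Sigma> X P u Ip Io \<and> represents \<Sigma> X P u' Ip' Io' \<longrightarrow>
            (\<exists>a b. a > 0 \<and> (\<forall>x\<in>X. u' x = a * u x + b)))
       \<and> (\<forall>u Ip Io Ip' Io'. represents \<Sigma> X P u Ip Io \<and> represents \<Sigma> X P u Ip' Io' \<longrightarrow>
            (\<forall>\<phi>\<in>B0 \<Sigma>. Ip' \<phi> = Ip \<phi> \<and> Io' \<phi> = Io \<phi>))"
  using axioms_imp_represents[OF assms(1,2)] represents_imp_axioms[OF assms(1,2)]
    represents_utility_unique[OF assms(1,2)] represents_functionals_unique[OF assms(1,2)]
  by blast

end
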